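(* Let $\Omega\subset\mathbb{R}^n$ ($n\in\{2,3\}$) be a bounded polygonal/polyhedral Lipschitz domain, $f\in L^2(\Omega)$, $g\in H^1(\Omega)\cap C(\overline\Omega)$ with $g\le0$ on $\partial\Omega$, and $\mathcal T$ a conforming simplicial mesh. Let $(\boldsymbol\sigma_h,\lambda_h,u_h)\in K_h\times M_h$ be the solution of the discrete problem $$(\boldsymbol\sigma_h,\boldsymbol\tau_h-\boldsymbol\sigma_h)_\Omega+(\operatorname{div}(\boldsymbol\tau_h-\boldsymbol\sigma_h)+\mu_h-\lambda_h,u_h)_\Omega\ge(\mu_h-\lambda_h,g)_\Omega\ \ \forall(\boldsymbol\tau_h,\mu_h)\in K_h,\qquad (\operatorname{div}\boldsymbol\sigma_h+\lambda_h,v_h)_\Omega=-(f,v_h)_\Omega\ \ \forall v_h\in M_h.$$ Then: (i) $\operatorname{div}\boldsymbol\sigma_h+\lambda_h=-\Pi_h^0f$; (ii) $(\boldsymbol\sigma_h,\boldsymbol\tau_h)_\Omega+(\operatorname{div}\boldsymbol\tau_h,u_h)_\Omega=0$ for all $\boldsymbol\tau_h\in\mathrm{RT}^0(\mathcal T)$; (iii) $(\lambda_h,u_h-g)_\Omega=0$, or equivalently $\lambda_h(x)\,(u_h(x)-\Pi_h^0g(x))=0$ for a.e. $x\in\Omega$; (iv) $u_h-\Pi_h^0g\ge0$.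
   Context: $M_h:=\mathcal P^0(\mathcal T)$ (piecewise constants), $V_h:=\mathrm{RT}^0(\mathcal T)\times\mathcal P^0(\mathcal T)$ with $\mathrm{RT}^0(\mathcal T)$ the lowest-order Raviart–Thomas space, $K_h:=\{(\boldsymbol\tau_h,\mu_h)\in V_h:\mu_h|_T\ge0\ \forall T\in\mathcal T\}$. $\Pi_h^0$ is the $L^2(\Omega)$-orthogonal projection onto $\mathcal P^0(\mathcal T)$. *)

theory Defs
  imports "HOL-Analysis.Analysis"
begin

definition pderiv_i :: "'n::finite \<Rightarrow> (real^'n \<Rightarrow> real) \<Rightarrow> real^'n \<Rightarrow> real" where
  "pderiv_i i \<phi> x = frechet_derivative \<phi> (at x) (axis i 1)"

definition grad :: "(real^'n::finite \<Rightarrow> real) \<Rightarrow> real^'n \<Rightarrow> real^'n" where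
  "grad \<phi> x = (\<chi> i. pderiv_i i \<phi> x)"

primrec Ck :: "nat \<Rightarrow> (real^'n::finite \<Rightarrow> real) \<Rightarrow> bool" where
  "Ck 0 f = continuous_on UNIV f"
| "Ck (Suc k) f = (continuous_on UNIV f \<and> (\<forall>x. f differentiable (at x)) \<and>
                    (\<forall>i. Ck k (pderiv_i i f)))"

definition smooth_fun :: "(real^'n::finite \<Rightarrow> real) \<Rightarrow> bool" where
  "smooth_fun f \<longleftrightarrow> (\<forall>k. Ck k f)"

definition test_fun :: "(real^'n::finite) set \<Rightarrow> (real^'n \<Rightarrow> real) \<Rightarrow> bool" where
  "test_fun \<Omega> \<phi> \<longleftrightarrow> smooth_fun \<phi> \<and> compact (closure {x. \<phi> x \<noteq> 0})
                       \<and> closure {x. \<phi> x \<noteq> 0} \<subseteq> \<Omega>"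

definition L2 :: "(real^'n::finite) set \<Rightarrow> (real^'n \<Rightarrow> real) \<Rightarrow> bool" where
  "L2 \<Omega> f \<longleftrightarrow> f \<in> borel_measurable (lebesgue_on \<Omega>) \<and> integrable (lebesgue_on \<Omega>) (\<lambda>x. (f x)\<^sup>2)"

definition L2v :: "(real^'n::finite) set \<Rightarrow> (real^'n \<Rightarrow> real^'n) \<Rightarrow> bool" where
  "L2v \<Omega> \<sigma> \<longleftrightarrow> (\<forall>i. L2 \<Omega> (\<lambda>x. \<sigma> x $ i))"

definition ip :: "(real^'n::finite) set \<Rightarrow> (real^'n \<Rightarrow> real) \<Rightarrow> (real^'n \<Rightarrow> real) \<Rightarrow> real" where
  "ip \<Omega> u v = (LINT x|lebesgue_on \<Omega>. u x * v x)"

definition ipv :: "(real^'n::finite) set \<Rightarrow> (real^'n \<Rightarrow> real^'n) \<Rightarrow> (real^'n \<Rightarrow> real^'n) \<Rightarrow> real" where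
  "ipv \<Omega> \<sigma> \<tau> = (LINT x|lebesgue_on \<Omega>. \<sigma> x \<bullet> \<tau> x)"

definition has_weak_grad :: "(real^'n::finite) set \<Rightarrow> (real^'n \<Rightarrow> real) \<Rightarrow> (real^'n \<Rightarrow> real^'n) \<Rightarrow> bool" where
  "has_weak_grad \<Omega> g G \<longleftrightarrow> (\<forall>\<phi> i. test_fun \<Omega> \<phi> \<longrightarrow>
      (LINT x|lebesgue_on \<Omega>. g x * pderiv_i i \<phi> x) = - (LINT x|lebesgue_on \<Omega>. G x $ i * \<phi> x))"

definition H1 :: "(real^'n::finite) set \<Rightarrow> (real^'n \<Rightarrow> real) set" where
  "H1 \<Omega> = {g. L2 \<Omega> g \<and> (\<exists>G. L2v \<Omega> G \<and> has_weak_grad \<Omega> g G)}"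

definition has_weak_div :: "(real^'n::finite) set \<Rightarrow> (real^'n \<Rightarrow> real^'n) \<Rightarrow> (real^'n \<Rightarrow> real) \<Rightarrow> bool" where
  "has_weak_div \<Omega> \<sigma> w \<longleftrightarrow> (\<forall>\<phi>. test_fun \<Omega> \<phi> \<longrightarrow>
      (LINT x|lebesgue_on \<Omega>. \<sigma> x \<bullet> grad \<phi> x) = - (LINT x|lebesgue_on \<Omega>. w x * \<phi> x))"

definition Hdiv :: "(real^'n::finite) set \<Rightarrow> (real^'n \<Rightarrow> real^'n) set" where
  "Hdiv \<Omega> = {\<sigma>. L2v \<Omega> \<sigma> \<and> (\<exists>w. L2 \<Omega> w \<and> has_weak_div \<Omega> \<sigma> w)}"

text \<open>div sigma (an L^2 function, unique up to null sets; a representative is chosen).\<close>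
definition wdiv :: "(real^'n::finite) set \<Rightarrow> (real^'n \<Rightarrow> real^'n) \<Rightarrow> real^'n \<Rightarrow> real" where
  "wdiv \<Omega> \<sigma> = (SOME w. L2 \<Omega> w \<and> has_weak_div \<Omega> \<sigma> w)"

text \<open>Lipschitz domain: open, bounded, connected, and locally (after a rigid rotation) the region
  below the graph of a Lipschitz function of the remaining n-1 coordinates.\<close>
definition lipschitz_domain :: "(real^'n::finite) set \<Rightarrow> bool" where
  "lipschitz_domain \<Omega> \<longleftrightarrow> open \<Omega> \<and> bounded \<Omega> \<and> connected \<Omega> \<and> \<Omega> \<noteq> {} \<and>
     (\<forall>x\<in>frontier \<Omega>. \<exists>Q r C (\<gamma>::real^'n \<Rightarrow> real) k.
         orthogonal_transformation Q \<and> r > 0 \<and> C-lipschitz_on UNIV \<gamma> \<and>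
         (\<forall>z t. \<gamma> (z + t *\<^sub>R axis k 1) = \<gamma> z) \<and>
         \<Omega> \<inter> ball x r = {y \<in> ball x r. Q (y - x) $ k < \<gamma> (Q (y - x))})"

definition conforming_simplicial_mesh :: "(real^'n::finite) set set \<Rightarrow> (real^'n) set \<Rightarrow> bool" where
  "conforming_simplicial_mesh \<T> \<Omega> \<longleftrightarrow> finite \<T> \<and> \<T> \<noteq> {} \<and>
     (\<forall>T\<in>\<T>. int CARD('n) simplex T) \<and>
     \<Union>\<T> = closure \<Omega> \<and>
     (\<forall>T1\<in>\<T>. \<forall>T2\<in>\<T>. (T1 \<inter> T2) face_of T1 \<and> (T1 \<inter> T2) face_of T2)"

text \<open>P^0(T): piecewise constants (values on the null set of element boundaries are irrelevant).\<close>
definition P0 :: "(real^'n::finite) set set \<Rightarrow> (real^'n \<Rightarrow> real) set" where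
  "P0 \<T> = {v. \<forall>T\<in>\<T>. \<exists>c. \<forall>x\<in>interior T. v x = c}"

definition RT0 :: "(real^'n::finite) set set \<Rightarrow> (real^'n) set \<Rightarrow> (real^'n \<Rightarrow> real^'n) set" where
  "RT0 \<T> \<Omega> = {\<sigma> \<in> Hdiv \<Omega>. \<forall>T\<in>\<T>. \<exists>a b. \<forall>x\<in>interior T. \<sigma> x = a + b *\<^sub>R x}"

definition Kh :: "(real^'n::finite) set set \<Rightarrow> (real^'n) set \<Rightarrow> ((real^'n \<Rightarrow> real^'n) \<times> (real^'n \<Rightarrow> real)) set" where
  "Kh \<T> \<Omega> = {(\<tau>, \<mu>). \<tau> \<in> RT0 \<T> \<Omega> \<and> \<mu> \<in> P0 \<T> \<and> (\<forall>T\<in>\<T>. \<forall>x\<in>interior T. \<mu> x \<ge> 0)}"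

definition Pi0 :: "(real^'n::finite) set set \<Rightarrow> (real^'n) set \<Rightarrow> (real^'n \<Rightarrow> real) \<Rightarrow> real^'n \<Rightarrow> real" where
  "Pi0 \<T> \<Omega> f = (SOME p. p \<in> P0 \<T> \<and> (\<forall>v\<in>P0 \<T>. ip \<Omega> (\<lambda>x. f x - p x) v = 0))"

end

(*
  Testing the variational inequality with (sigma_h + tau_h, lambda_h) and (sigma_h - tau_h, lambda_h)
  gives (ii). Testing it with (sigma_h, mu_h) gives
    sum_T (mu_T - lambda_T) * int_T (u_h - g) >= 0
  for every elementwise nonnegative mu_h; the choices mu_h = lambda_h + 1_T, mu_h = 0 and
  mu_h = 2 lambda_h show that every gap int_T (u_h - g) is nonnegative and that
  sum_T lambda_T * int_T (u_h - g) = 0. On T, u_h - Pi g is this gap divided by |T|, which gives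
  (iii) and (iv). For (i), sigma_h = a_T + b_T x on T forces div sigma_h = n b_T there, so
  div sigma_h + lambda_h is piecewise constant and the discrete equation identifies it with -Pi f.

  Since the divergence is only determined up to null sets, each of these computations rests on the
  uniqueness of weak divergences, i.e. on the fundamental lemma of the calculus of variations; its
  test functions are smooth bumps built from exp (-1/t).
*)

theory Submission
  imports Defs "HOL-Computational_Algebra.Polynomial"
begin

section \<open>Partial derivatives and the classes \<open>C\<^sup>k\<close>\<close>

lemma pderiv_i_eq: "(f has_derivative D) (at x) \<Longrightarrow> pderiv_i i f x = D (axis i 1)"
  unfolding pderiv_i_def by (metis frechet_derivative_at)

lemma pderiv_i_add:
  assumes "f differentiable (at x)" "g differentiable (at x)"
  shows "pderiv_i i (\<lambda>x. f x + g x) x = pderiv_i i f x + pderiv_i i g x"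
proof -
  have "((\<lambda>x. f x + g x) has_derivative
      (\<lambda>h. frechet_derivative f (at x) h + frechet_derivative g (at x) h)) (at x)"
    using assms by (intro has_derivative_add frechet_derivative_works[THEN iffD1])
  from pderiv_i_eq[OF this] show ?thesis by (simp add: pderiv_i_def)
qed

lemma pderiv_i_mult:
  assumes "f differentiable (at x)" "g differentiable (at x)"
  shows "pderiv_i i (\<lambda>x. f x * g x) x = f x * pderiv_i i g x + pderiv_i i f x * g x"
proof -
  have "((\<lambda>x. f x * g x) has_derivative
      (\<lambda>h. f x * frechet_derivative g (at x) h + frechet_derivative f (at x) h * g x)) (at x)"
    using assms by (intro has_derivative_mult frechet_derivative_works[THEN iffD1])
  from pderiv_i_eq[OF this] show ?thesis by (simp add: pderiv_i_def)
qed

lemma pderiv_i_compose: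
  assumes h: "(h has_real_derivative h') (at (f x))" and f: "f differentiable (at x)"
  shows "pderiv_i i (\<lambda>x. h (f x)) x = h' * pderiv_i i f x"
proof -
  have "(h has_derivative (*) h') (at (f x))"
    using h by (simp add: has_field_derivative_def)
  from diff_chain_at[OF frechet_derivative_works[THEN iffD1, OF f] this]
  have "((\<lambda>x. h (f x)) has_derivative (\<lambda>v. h' * frechet_derivative f (at x) v)) (at x)"
    by (simp add: o_def)
  from pderiv_i_eq[OF this] show ?thesis by (simp add: pderiv_i_def)
qed

lemma pderiv_i_const: "pderiv_i i (\<lambda>x::real^'n::finite. c::real) x = 0"
  by (subst pderiv_i_eq[OF has_derivative_const]) simp

lemma pderiv_i_component: "pderiv_i i (\<lambda>x::real^'n::finite. x $ j) x = axis i 1 $ j"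
  by (subst pderiv_i_eq[OF bounded_linear_imp_has_derivative[OF bounded_linear_vec_nth]]) simp

lemma pderiv_i_outside_support:
  fixes \<psi> :: "real^'n::finite \<Rightarrow> real"
  assumes "x \<notin> closure {x. \<psi> x \<noteq> 0}"
  shows "pderiv_i i \<psi> x = 0"
proof -
  have "((\<lambda>x. 0) has_derivative (\<lambda>h. 0)) (at x)" by simp
  then have "(\<psi> has_derivative (\<lambda>h. 0)) (at x)"
    by (rule has_derivative_transform_within_open[of _ _ _ _ "- closure {x. \<psi> x \<noteq> 0}"])
       (use assms closure_subset[of "{x. \<psi> x \<noteq> 0}"] in auto)
  then show ?thesis by (simp add: pderiv_i_eq)
qed

lemma grad_outside_support:
  fixes \<phi> :: "real^'n::finite \<Rightarrow> real"
  shows "x \<notin> closure {x. \<phi> x \<noteq> 0} \<Longrightarrow> grad \<phi> x = 0"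
  unfolding grad_def by (simp add: vec_eq_iff pderiv_i_outside_support)

lemma inner_grad: "s \<bullet> grad \<phi> x = (\<Sum>i\<in>UNIV. s $ i * pderiv_i i \<phi> x)"
  by (simp add: inner_vec_def grad_def)

lemma Ck_imp_continuous_on: "Ck k f \<Longrightarrow> continuous_on UNIV f"
  by (cases k) auto

lemma Ck_Suc_imp_Ck: "Ck (Suc k) f \<Longrightarrow> Ck k f"
  by (induction k arbitrary: f) auto

lemma Ck_add:
  fixes f g :: "real^'n::finite \<Rightarrow> real"
  shows "Ck k f \<Longrightarrow> Ck k g \<Longrightarrow> Ck k (\<lambda>x. f x + g x)"
proof (induction k arbitrary: f g)
  case (Suc k)
  then have "\<And>x. f differentiable (at x)" "\<And>x. g differentiable (at x)" by auto
  then have "pderiv_i i (\<lambda>x. f x + g x) = (\<lambda>x. pderiv_i i f x + pderiv_i i g x)" for i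
    by (simp add: pderiv_i_add fun_eq_iff)
  with Suc show ?case by (auto intro!: continuous_intros)
qed (auto intro: continuous_intros)

lemma Ck_mult:
  fixes f g :: "real^'n::finite \<Rightarrow> real"
  shows "Ck k f \<Longrightarrow> Ck k g \<Longrightarrow> Ck k (\<lambda>x. f x * g x)"
proof (induction k arbitrary: f g)
  case (Suc k)
  then have "\<And>x. f differentiable (at x)" "\<And>x. g differentiable (at x)" by auto
  then have "pderiv_i i (\<lambda>x. f x * g x) = (\<lambda>x. f x * pderiv_i i g x + pderiv_i i f x * g x)" for i
    by (simp add: pderiv_i_mult fun_eq_iff)
  moreover have "Ck k (\<lambda>x. f x * pderiv_i i g x + pderiv_i i f x * g x)" for i
    using Suc Ck_Suc_imp_Ck[OF Suc.prems(1)] Ck_Suc_imp_Ck[OF Suc.prems(2)] by (intro Ck_add Suc.IH) auto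
  ultimately show ?case using Suc by (auto intro!: continuous_intros)
qed (auto intro: continuous_intros)

lemma Ck_const: "Ck k (\<lambda>x::real^'n::finite. c::real)"
proof (induction k arbitrary: c)
  case (Suc k)
  have "pderiv_i i (\<lambda>x::real^'n. c) = (\<lambda>x. 0)" for i
    by (simp add: pderiv_i_const fun_eq_iff)
  then show ?case using Suc.IH[of 0] by simp
qed simp

lemma Ck_component: "Ck k (\<lambda>x::real^'n::finite. x $ j)"
proof (cases k)
  case (Suc m)
  have "pderiv_i i (\<lambda>x::real^'n. x $ j) = (\<lambda>x. axis i 1 $ j)" for i
    by (simp add: pderiv_i_component fun_eq_iff)
  then show ?thesis
    using Suc by (auto simp: Ck_const intro!: continuous_intros bounded_linear_imp_differentiable bounded_linear_vec_nth)
qed (auto intro!: continuous_intros)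

lemma Ck_diff:
  fixes f g :: "real^'n::finite \<Rightarrow> real"
  assumes "Ck k f" "Ck k g"
  shows "Ck k (\<lambda>x. f x - g x)"
  using Ck_add[OF assms(1) Ck_mult[OF Ck_const assms(2)], of "-1"] by simp

lemma Ck_prod:
  fixes f :: "'i \<Rightarrow> real^'n::finite \<Rightarrow> real"
  shows "finite I \<Longrightarrow> (\<And>i. i \<in> I \<Longrightarrow> Ck k (f i)) \<Longrightarrow> Ck k (\<lambda>x. \<Prod>i\<in>I. f i x)"
  by (induction I rule: finite_induct) (auto simp: Ck_const intro!: Ck_mult)

lemma Ck_compose:
  fixes F :: "real^'n::finite \<Rightarrow> real" and D :: "nat \<Rightarrow> real \<Rightarrow> real"
  assumes D: "\<And>j t. (D j has_real_derivative D (Suc j) t) (at t)"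
  shows "Ck k F \<Longrightarrow> Ck k (\<lambda>x. D j (F x))"
proof -
  have cont: "continuous_on UNIV (D j)" for j
    using D by (meson DERIV_isCont continuous_at_imp_continuous_on)
  show "Ck k F \<Longrightarrow> Ck k (\<lambda>x. D j (F x))"
  proof (induction k arbitrary: j F)
    case 0
    then show ?case by (auto intro: continuous_on_compose2[OF cont])
  next
    case (Suc k)
    then have dF: "\<And>x. F differentiable (at x)" by auto
    have "pderiv_i i (\<lambda>x. D j (F x)) = (\<lambda>x. D (Suc j) (F x) * pderiv_i i F x)" for i
      using pderiv_i_compose[OF D dF] by (simp add: fun_eq_iff)
    moreover have "Ck k (\<lambda>x. D (Suc j) (F x) * pderiv_i i F x)" for i
      using Suc Ck_Suc_imp_Ck[OF Suc.prems] by (intro Ck_mult Suc.IH) auto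
    moreover have "(\<lambda>x. D j (F x)) differentiable (at x)" for x
      using differentiable_chain_at[OF dF, of "D j"] D by (auto simp: o_def real_differentiable_def)
    moreover have "continuous_on UNIV (\<lambda>x. D j (F x))"
      using Suc.prems by (auto intro: continuous_on_compose2[OF cont] dest: Ck_imp_continuous_on)
    ultimately show ?case by simp
  qed
qed

section \<open>Smooth bump functions\<close>

lemma tendsto_poly_times_exp_neg: "((\<lambda>s. poly Q s * exp (-s)) \<longlongrightarrow> (0::real)) at_top"
proof -
  have "((\<lambda>s. \<Sum>i\<le>degree Q. coeff Q i * (s ^ i / exp s)) \<longlongrightarrow> (\<Sum>i\<le>degree Q. coeff Q i * 0)) at_top"
    by (intro tendsto_sum tendsto_mult tendsto_const tendsto_power_div_exp_0)
  moreover have "(\<lambda>s. \<Sum>i\<le>degree Q. coeff Q i * (s ^ i / exp s)) = (\<lambda>s. poly Q s * exp (-s))"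
    by (rule ext) (simp add: poly_altdef sum_distrib_right exp_minus divide_inverse mult.assoc)
  ultimately show ?thesis by simp
qed

text \<open>\<open>flat_exp 0\<close> is \<open>t \<mapsto> exp (-1/t)\<close> for \<open>t > 0\<close> and \<open>0\<close> otherwise; its \<open>j\<close>-th derivative
  \<open>flat_exp j\<close> is \<open>flat_poly j\<close> evaluated at \<open>1/t\<close>, times \<open>exp (-1/t)\<close>.\<close>

fun flat_poly :: "nat \<Rightarrow> real poly" where
  "flat_poly 0 = 1"
| "flat_poly (Suc j) = [:0, 0, 1:] * (flat_poly j - pderiv (flat_poly j))"

definition flat_exp :: "nat \<Rightarrow> real \<Rightarrow> real" where
  "flat_exp j t = (if t > 0 then poly (flat_poly j) (1/t) * exp (-1/t) else 0)"

lemma flat_exp_divide_tendsto_0: "((\<lambda>h. flat_exp j h / h) \<longlongrightarrow> 0) (at 0)"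
proof -
  have "((\<lambda>h. flat_exp j h / h) \<longlongrightarrow> 0) (at_left 0)"
    by (rule tendsto_eventually, rule eventually_mono[OF eventually_at_left_real[of "-1::real" 0]])
       (auto simp: flat_exp_def)
  moreover have "((\<lambda>h. flat_exp j h / h) \<longlongrightarrow> 0) (at_right 0)"
  proof -
    have "((\<lambda>h. poly (pCons 0 (flat_poly j)) (inverse h) * exp (- inverse h)) \<longlongrightarrow> 0) (at_right 0)"
      using filterlim_compose[OF tendsto_poly_times_exp_neg[of "pCons 0 (flat_poly j)"]
          filterlim_inverse_at_top_right]
      by (simp add: o_def)
    moreover have "\<forall>\<^sub>F h in at_right 0.
        poly (pCons 0 (flat_poly j)) (inverse h) * exp (- inverse h) = flat_exp j h / h"
      by (rule eventually_at_rightI[of 0 1]) (auto simp: flat_exp_def field_simps)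
    ultimately show ?thesis by (simp add: tendsto_cong)
  qed
  ultimately show ?thesis by (simp add: filterlim_at_split)
qed

lemma has_real_derivative_flat_exp: "(flat_exp j has_real_derivative flat_exp (Suc j) t) (at t)"
proof -
  consider "t > 0" | "t < 0" | "t = 0" by linarith
  then show ?thesis
  proof cases
    case 1
    let ?P = "flat_poly j"
    have "((\<lambda>t. poly ?P (1/t) * exp (-1/t)) has_real_derivative
        (poly (pderiv ?P) (1/t) * (- 1 / t^2) * exp (-1/t) + poly ?P (1/t) * (exp (-1/t) * (1 / t^2)))) (at t)"
      using 1 by (auto intro!: derivative_eq_intros DERIV_chain2[OF poly_DERIV]
          simp: power2_eq_square field_simps)
    moreover have "poly (pderiv ?P) (1/t) * (- 1 / t^2) * exp (-1/t) + poly ?P (1/t) * (exp (-1/t) * (1 / t^2))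
        = flat_exp (Suc j) t"
      using 1 by (simp add: flat_exp_def algebra_simps power2_eq_square)
    ultimately have "((\<lambda>t. poly ?P (1/t) * exp (-1/t)) has_real_derivative flat_exp (Suc j) t) (at t)"
      by simp
    then show ?thesis
      by (rule has_field_derivative_transform_within_open[of _ _ _ "{0<..}"])
        (use 1 in \<open>auto simp: flat_exp_def\<close>)
  next
    case 2
    have "((\<lambda>t. 0) has_real_derivative flat_exp (Suc j) t) (at t)"
      using 2 by (simp add: flat_exp_def)
    then show ?thesis
      by (rule has_field_derivative_transform_within_open[of _ _ _ "{..<0}"])
        (use 2 in \<open>auto simp: flat_exp_def\<close>)
  next
    case 3
    then show ?thesis
      using flat_exp_divide_tendsto_0[of j] by (simp add: DERIV_def flat_exp_def)
  qed
qed

lemma flat_exp_0_nonneg: "flat_exp 0 t \<ge> 0"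
  and flat_exp_0_pos_iff: "flat_exp 0 t > 0 \<longleftrightarrow> t > 0"
  and flat_exp_0_le_1: "flat_exp 0 t \<le> 1"
  by (simp_all add: flat_exp_def)

lemma Ck_flat_exp_compose: "Ck k F \<Longrightarrow> Ck k (\<lambda>x. flat_exp j (F x))"
  by (rule Ck_compose[where D = flat_exp, OF has_real_derivative_flat_exp])

definition box_bump :: "real^'n::finite \<Rightarrow> real^'n \<Rightarrow> real^'n \<Rightarrow> real" where
  "box_bump a b x = (\<Prod>i\<in>UNIV. flat_exp 0 ((x$i - a$i) * (b$i - x$i)))"

definition box_bump_seq :: "nat \<Rightarrow> real^'n::finite \<Rightarrow> real^'n \<Rightarrow> real^'n \<Rightarrow> real" where
  "box_bump_seq m a b x = flat_exp 0 (real (Suc m) * box_bump a b x)"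

lemma Ck_box_bump: "Ck k (box_bump a b)"
  unfolding box_bump_def[abs_def]
  by (intro Ck_prod Ck_flat_exp_compose Ck_mult Ck_diff Ck_component Ck_const) simp

lemma smooth_fun_box_bump_seq: "smooth_fun (box_bump_seq m a b)"
  unfolding smooth_fun_def box_bump_seq_def[abs_def]
  by (intro allI Ck_flat_exp_compose Ck_mult Ck_const Ck_box_bump)

lemma box_bump_pos_iff:
  fixes a b :: "real^'n::finite"
  assumes "box a b \<noteq> {}"
  shows "box_bump a b x > 0 \<longleftrightarrow> x \<in> box a b"
proof -
  have "a$i < b$i" for i
  proof -
    obtain y where "y \<in> box a b" using assms by blast
    then show ?thesis by (auto simp: mem_box_cart intro: order.strict_trans[of "a$i" "y$i"])
  qed
  then have factor_pos_iff: "flat_exp 0 ((x$i - a$i) * (b$i - x$i)) > 0 \<longleftrightarrow> a$i < x$i \<and> x$i < b$i" for i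
    by (smt (verit) flat_exp_0_pos_iff zero_less_mult_iff)
  show ?thesis
  proof
    assume "box_bump a b x > 0"
    then have "(\<Prod>i\<in>UNIV. flat_exp 0 ((x$i - a$i) * (b$i - x$i))) \<noteq> 0"
      unfolding box_bump_def by linarith
    then have "flat_exp 0 ((x$i - a$i) * (b$i - x$i)) \<noteq> 0" for i
      by (simp add: prod_zero_iff)
    then show "x \<in> box a b"
      using factor_pos_iff flat_exp_0_nonneg by (auto simp: mem_box_cart order_less_le)
  qed (auto simp: box_bump_def mem_box_cart factor_pos_iff intro!: prod_pos)
qed

lemma box_bump_seq_nonzero_iff:
  assumes "box a b \<noteq> {}"
  shows "box_bump_seq m a b x \<noteq> 0 \<longleftrightarrow> x \<in> box a b"
proof -
  have "box_bump_seq m a b x \<noteq> 0 \<longleftrightarrow> real (Suc m) * box_bump a b x > 0"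
    unfolding box_bump_seq_def using flat_exp_0_nonneg flat_exp_0_pos_iff by (metis order_less_le)
  also have "\<dots> \<longleftrightarrow> x \<in> box a b"
    using box_bump_pos_iff[OF assms] by (simp add: zero_less_mult_iff)
  finally show ?thesis .
qed

lemma box_bump_seq_bounds: "0 \<le> box_bump_seq m a b x" "box_bump_seq m a b x \<le> 1"
  unfolding box_bump_seq_def by (auto simp: flat_exp_0_nonneg flat_exp_0_le_1)

lemma box_bump_seq_tendsto_indicator:
  assumes "box a b \<noteq> {}"
  shows "(\<lambda>m. box_bump_seq m a b x) \<longlonglongrightarrow> indicator (box a b) x"
proof (cases "x \<in> box a b")
  case True
  then have pos: "box_bump a b x > 0" using box_bump_pos_iff[OF assms] by simp
  have "box_bump_seq m a b x = exp (- (1 / box_bump a b x) * inverse (real (Suc m)))" for m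
    using pos by (simp add: box_bump_seq_def flat_exp_def field_simps add_pos_nonneg)
  moreover have "(\<lambda>m. exp (- (1 / box_bump a b x) * inverse (real (Suc m))))
      \<longlonglongrightarrow> exp (- (1 / box_bump a b x) * 0)"
    by (intro tendsto_intros LIMSEQ_inverse_real_of_nat)
  ultimately show ?thesis using True by simp
next
  case False
  then have "box_bump_seq m a b x = 0" for m
    using box_bump_seq_nonzero_iff[OF assms] by blast
  then show ?thesis using False by simp
qed

lemma test_fun_box_bump_seq:
  assumes "box a b \<noteq> {}" and "cbox a b \<subseteq> U"
  shows "test_fun U (box_bump_seq m a b)"
proof -
  have "{x. box_bump_seq m a b x \<noteq> 0} = box a b"
    using box_bump_seq_nonzero_iff[OF assms(1)] by auto
  then show ?thesis
    unfolding test_fun_def using smooth_fun_box_bump_seq assms by simp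
qed

section \<open>The fundamental lemma of the calculus of variations\<close>

lemma borel_measurable_lebesgue_onI:
  "f \<in> borel_measurable borel \<Longrightarrow> f \<in> borel_measurable (lebesgue_on S)"
  by (intro measurable_restrict_space1 measurable_completion) simp

lemma integrable_mult_bounded:
  fixes f g :: "'a \<Rightarrow> real"
  assumes f: "integrable M f" and g: "g \<in> borel_measurable M" and C: "\<And>x. \<bar>g x\<bar> \<le> C"
  shows "integrable M (\<lambda>x. f x * g x)"
proof (rule Bochner_Integration.integrable_bound[where f = "\<lambda>x. C * f x"])
  show "integrable M (\<lambda>x. C * f x)" using f by simp
  show "(\<lambda>x. f x * g x) \<in> borel_measurable M" using f g by (intro borel_measurable_times) auto
  have "\<bar>f x\<bar> * \<bar>g x\<bar> \<le> \<bar>f x\<bar> * \<bar>C\<bar>" for x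
    using C[of x] by (intro mult_left_mono) auto
  then show "AE x in M. norm (f x * g x) \<le> norm (C * f x)"
    by (simp add: abs_mult mult.commute)
qed

lemma bounded_if_compact_support:
  fixes f :: "'a::metric_space \<Rightarrow> real"
  assumes "continuous_on UNIV f" "compact K" "\<And>x. x \<notin> K \<Longrightarrow> f x = 0"
  shows "\<exists>C. \<forall>x. \<bar>f x\<bar> \<le> C"
proof -
  have "compact (f ` K)"
    by (rule compact_continuous_image[OF continuous_on_subset[OF assms(1)] assms(2)]) simp
  then obtain B where "\<forall>y\<in>f ` K. norm y \<le> B"
    using compact_imp_bounded bounded_iff by metis
  then have "\<bar>f x\<bar> \<le> max B 0" for x
    using assms(3)[of x] by (cases "x \<in> K") force+
  then show ?thesis by blast
qed

lemma integrable_lborel_if_compact_support: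
  fixes f :: "real^'n::finite \<Rightarrow> real"
  assumes "continuous_on UNIV f" "compact K" "\<And>x. x \<notin> K \<Longrightarrow> f x = 0"
  shows "integrable lborel f"
proof -
  have "integrable lborel (\<lambda>x. indicator K x *\<^sub>R f x)"
    by (rule borel_integrable_compact[OF assms(2) continuous_on_subset[OF assms(1)]]) simp
  moreover have "(\<lambda>x. indicator K x *\<^sub>R f x) = f"
    using assms(3) by (auto split: split_indicator)
  ultimately show ?thesis by simp
qed

lemma eq_0_outside_support: "x \<notin> closure {x. \<phi> x \<noteq> 0} \<Longrightarrow> \<phi> x = 0"
  using closure_subset[of "{x. \<phi> x \<noteq> 0}"] by auto

lemma test_fun_continuous_on: "test_fun U \<phi> \<Longrightarrow> continuous_on UNIV \<phi>"
  unfolding test_fun_def smooth_fun_def by (metis Ck_imp_continuous_on)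

lemma test_fun_borel_measurable: "test_fun U \<phi> \<Longrightarrow> \<phi> \<in> borel_measurable (lebesgue_on S)"
  by (intro borel_measurable_lebesgue_onI borel_measurable_continuous_onI test_fun_continuous_on)

lemma test_fun_bounded: "test_fun U \<phi> \<Longrightarrow> \<exists>C. \<forall>x. \<bar>\<phi> x\<bar> \<le> C"
  by (rule bounded_if_compact_support[OF test_fun_continuous_on, of U \<phi> "closure {x. \<phi> x \<noteq> 0}"])
     (auto simp: test_fun_def intro: eq_0_outside_support)

lemma test_fun_mono: "test_fun U \<phi> \<Longrightarrow> U \<subseteq> V \<Longrightarrow> test_fun V \<phi>"
  unfolding test_fun_def by blast

lemma integrable_mult_test_fun:
  assumes "integrable (lebesgue_on S) w" and "test_fun U \<phi>"
  shows "integrable (lebesgue_on S) (\<lambda>x. w x * \<phi> x)"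
proof -
  obtain C where "\<And>x. \<bar>\<phi> x\<bar> \<le> C" using test_fun_bounded[OF assms(2)] by blast
  then show ?thesis by (rule integrable_mult_bounded[OF assms(1) test_fun_borel_measurable[OF assms(2)]])
qed

lemma test_fun_pderiv_i:
  assumes "test_fun U \<phi>"
  shows "continuous_on UNIV (pderiv_i i \<phi>)" "\<exists>C. \<forall>x. \<bar>pderiv_i i \<phi> x\<bar> \<le> C"
proof -
  have "Ck (Suc 0) \<phi>" using assms unfolding test_fun_def smooth_fun_def by blast
  then show cont: "continuous_on UNIV (pderiv_i i \<phi>)" unfolding Ck.simps by blast
  show "\<exists>C. \<forall>x. \<bar>pderiv_i i \<phi> x\<bar> \<le> C"
    by (rule bounded_if_compact_support[OF cont, of "closure {x. \<phi> x \<noteq> 0}"])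
       (use assms pderiv_i_outside_support in \<open>auto simp: test_fun_def\<close>)
qed

lemma integral_indicator_box_eq_0:
  fixes w :: "real^'n::finite \<Rightarrow> real"
  assumes w: "integrable (lebesgue_on S) w"
    and orth: "\<And>\<phi>. test_fun U \<phi> \<Longrightarrow> (LINT x|lebesgue_on S. w x * \<phi> x) = 0"
    and ne: "box a b \<noteq> {}" and sub: "cbox a b \<subseteq> U"
  shows "(LINT x|lebesgue_on S. w x * indicator (box a b) x) = 0"
proof -
  have wm: "w \<in> borel_measurable (lebesgue_on S)" using w by auto
  have "(\<lambda>m. LINT x|lebesgue_on S. w x * box_bump_seq m a b x)
      \<longlonglongrightarrow> (LINT x|lebesgue_on S. w x * indicator (box a b) x)"
  proof (rule integral_dominated_convergence[where w = "\<lambda>x. norm (w x)"])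
    show "(\<lambda>x. w x * indicator (box a b) x) \<in> borel_measurable (lebesgue_on S)"
      by (rule borel_measurable_times[OF wm borel_measurable_lebesgue_onI]) simp
    show "(\<lambda>x. w x * box_bump_seq m a b x) \<in> borel_measurable (lebesgue_on S)" for m
      by (rule borel_measurable_times[OF wm test_fun_borel_measurable[OF test_fun_box_bump_seq[OF ne sub]]])
    show "integrable (lebesgue_on S) (\<lambda>x. norm (w x))" using w by simp
    show "AE x in lebesgue_on S. (\<lambda>m. w x * box_bump_seq m a b x) \<longlonglongrightarrow> w x * indicator (box a b) x"
      by (intro AE_I2 tendsto_mult tendsto_const box_bump_seq_tendsto_indicator[OF ne])
    have "\<bar>w x\<bar> * \<bar>box_bump_seq m a b x\<bar> \<le> \<bar>w x\<bar> * 1" for m x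
      using box_bump_seq_bounds[of m a b x] by (intro mult_left_mono) auto
    then show "AE x in lebesgue_on S. norm (w x * box_bump_seq m a b x) \<le> norm (w x)" for m
      by (simp add: abs_mult)
  qed
  moreover have "(LINT x|lebesgue_on S. w x * box_bump_seq m a b x) = 0" for m
    by (rule orth[OF test_fun_box_bump_seq[OF ne sub]])
  ultimately show ?thesis by (simp add: LIMSEQ_const_iff)
qed

lemma emeasure_density_eq_integral:
  fixes g :: "'a::euclidean_space \<Rightarrow> real"
  assumes "g \<in> borel_measurable borel" "integrable lborel g" "\<And>x. g x \<ge> 0" "X \<in> sets borel"
  shows "emeasure (density lborel (\<lambda>x. ennreal (g x))) X = ennreal (LINT x|lborel. g x * indicator X x)"
proof -
  have "emeasure (density lborel (\<lambda>x. ennreal (g x))) X = (\<integral>\<^sup>+ x. ennreal (g x) * indicator X x \<partial>lborel)"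
    using assms by (subst emeasure_density) auto
  also have "\<dots> = (\<integral>\<^sup>+ x. ennreal (g x * indicator X x) \<partial>lborel)"
    by (intro nn_integral_cong) (auto split: split_indicator)
  also have "\<dots> = ennreal (LINT x|lborel. g x * indicator X x)"
    using assms by (intro nn_integral_eq_integral integrable_real_mult_indicator) auto
  finally show ?thesis .
qed

text \<open>The two densities define finite measures that agree on the \<open>Int\<close>-stable generator of open
  boxes, hence they coincide.\<close>

lemma AE_eq_if_box_integrals_eq:
  fixes p q :: "real^'n::finite \<Rightarrow> real"
  assumes pb: "p \<in> borel_measurable borel" and qb: "q \<in> borel_measurable borel"
    and p_int: "integrable lborel p" and q_int: "integrable lborel q"
    and nonneg: "\<And>x. p x \<ge> 0" "\<And>x. q x \<ge> 0"
    and box_eq: "\<And>a b. (LINT x|lborel. p x * indicator (box a b) x) = (LINT x|lborel. q x * indicator (box a b) x)"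
  shows "AE x in lborel. p x = q x"
proof -
  let ?E = "range (\<lambda>(a, b). box a b :: (real^'n) set)"
  have dens: "density lborel (\<lambda>x. ennreal (p x)) = density lborel (\<lambda>x. ennreal (q x))"
  proof (rule measure_eqI_generator_eq[where E = ?E and \<Omega> = UNIV
        and A = "\<lambda>n::nat. box (- (real n *\<^sub>R One)) (real n *\<^sub>R One)"])
    show "Int_stable ?E" by (auto simp: Int_stable_def box_Int_box)
    show "?E \<subseteq> Pow UNIV" by auto
    show "sets (density lborel (\<lambda>x. ennreal (p x))) = sigma_sets UNIV ?E"
      and "sets (density lborel (\<lambda>x. ennreal (q x))) = sigma_sets UNIV ?E"
      by (simp_all add: borel_eq_box)
    show "range (\<lambda>n::nat. box (- (real n *\<^sub>R One)) (real n *\<^sub>R One)) \<subseteq> ?E" by auto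
    show "(\<Union>i::nat. box (- (real i *\<^sub>R One)) (real i *\<^sub>R One)) = (UNIV :: (real^'n) set)"
      unfolding UN_box_eq_UNIV by auto
    show "emeasure (density lborel (\<lambda>x. ennreal (p x))) X = emeasure (density lborel (\<lambda>x. ennreal (q x))) X"
      if "X \<in> ?E" for X
      using that box_eq by (auto simp: emeasure_density_eq_integral pb qb p_int q_int nonneg)
    show "emeasure (density lborel (\<lambda>x. ennreal (p x))) (box (- (real i *\<^sub>R One)) (real i *\<^sub>R One)) \<noteq> \<infinity>" for i
      by (simp add: emeasure_density_eq_integral pb p_int nonneg)
  qed
  have "integral\<^sup>N lborel (\<lambda>x. ennreal (p x)) \<noteq> \<infinity>"
    using nn_integral_eq_integral[OF p_int] nonneg by simp
  then have "AE x in lborel. ennreal (p x) = ennreal (q x)"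
    using finite_density_unique[THEN iffD1, OF _ _ _ _ _ dens] pb qb by auto
  then show ?thesis by (rule AE_mp[OF _ AE_I2]) (simp add: nonneg)
qed

lemma AE_eq_0_on_box:
  fixes h :: "real^'n::finite \<Rightarrow> real" and c d :: "real^'n"
  assumes hb: "h \<in> borel_measurable borel" and hi: "integrable lborel h"
    and box_int: "\<And>a b. box a b \<noteq> {} \<Longrightarrow> cbox a b \<subseteq> cbox c d \<Longrightarrow>
      (LINT x|lborel. h x * indicator (box a b) x) = 0"
  shows "AE x in lborel. x \<in> box c d \<longrightarrow> h x = 0"
proof -
  let ?Q = "box c d"
  define hp where "hp x = max 0 (h x) * indicator ?Q x" for x
  define hm where "hm x = max 0 (- h x) * indicator ?Q x" for x
  have Qb: "indicator ?Q \<in> borel_measurable borel" by simp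
  have hpb: "hp \<in> borel_measurable borel" and hmb: "hm \<in> borel_measurable borel"
    unfolding hp_def[abs_def] hm_def[abs_def]
    by (intro borel_measurable_times borel_measurable_max borel_measurable_const
        borel_measurable_uminus hb Qb)+
  have hpi: "integrable lborel hp" and hmi: "integrable lborel hm"
    by (rule Bochner_Integration.integrable_bound[OF integrable_abs[OF hi]],
        use hpb hmb in \<open>auto simp: hp_def hm_def split: split_indicator\<close>)+
  have Q_int: "(LINT x|lborel. h x * indicator (box a b \<inter> ?Q) x) = 0" for a b
  proof (cases "box a b \<inter> ?Q = {}")
    case False
    obtain a' b' where ab': "box a b \<inter> ?Q = box a' b'" using box_Int_box by blast
    have "cbox a' b' = closure (box a' b')" using False ab' by simp
    also have "\<dots> \<subseteq> closure ?Q" using ab' by (intro closure_mono) auto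
    also have "\<dots> \<subseteq> cbox c d" by (intro closure_minimal box_subset_cbox closed_cbox)
    finally show ?thesis using box_int[of a' b'] False ab' by simp
  qed simp
  have "(LINT x|lborel. hp x * indicator (box a b) x) = (LINT x|lborel. hm x * indicator (box a b) x)" for a b
  proof -
    have "(LINT x|lborel. hp x * indicator (box a b) x) - (LINT x|lborel. hm x * indicator (box a b) x)
        = (LINT x|lborel. hp x * indicator (box a b) x - hm x * indicator (box a b) x)"
      by (rule Bochner_Integration.integral_diff[symmetric])
         (auto intro!: integrable_real_mult_indicator hpi hmi)
    also have "\<dots> = (LINT x|lborel. h x * indicator (box a b \<inter> ?Q) x)"
      by (rule Bochner_Integration.integral_cong) (auto simp: hp_def hm_def split: split_indicator)
    finally show ?thesis using Q_int by simp
  qed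
  then have "AE x in lborel. hp x = hm x"
    by (intro AE_eq_if_box_integrals_eq hpb hmb hpi hmi) (auto simp: hp_def hm_def)
  then show ?thesis
    by (rule AE_mp[OF _ AE_I2]) (auto simp: hp_def hm_def max_def split: if_splits)
qed

lemma negligible_nonzero_if_box_integrals_vanish:
  fixes h :: "real^'n::finite \<Rightarrow> real"
  assumes hb: "h \<in> borel_measurable borel" and hi: "integrable lborel h" and U: "open U"
    and box_int: "\<And>a b. box a b \<noteq> {} \<Longrightarrow> cbox a b \<subseteq> U \<Longrightarrow>
      (LINT x|lborel. h x * indicator (box a b) x) = 0"
  shows "negligible {x\<in>U. h x \<noteq> 0}"
proof (rule locally_negligible_alt[THEN iffD2], intro ballI)
  fix x assume "x \<in> {x\<in>U. h x \<noteq> 0}"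
  then obtain c d where cd: "cbox c d \<subseteq> U" "x \<in> box c d"
    using open_contains_cbox[OF U] by blast
  have "AE y in lborel. y \<in> box c d \<longrightarrow> h y = 0"
    using cd by (intro AE_eq_0_on_box[OF hb hi] box_int) auto
  moreover have "{y \<in> box c d. h y \<noteq> 0} \<in> sets lborel"
  proof -
    have "{y \<in> box c d. h y \<noteq> 0} = box c d \<inter> (h -` (UNIV - {0}) \<inter> space borel)" by auto
    also have "\<dots> \<in> sets borel" using hb by (intro sets.Int measurable_sets) auto
    finally show ?thesis by simp
  qed
  ultimately have "{y \<in> box c d. h y \<noteq> 0} \<in> null_sets lborel"
    by (simp add: AE_iff_measurable[of "{y \<in> box c d. h y \<noteq> 0}"] null_sets_def)
  then have "negligible {y \<in> box c d. h y \<noteq> 0}"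
    by (simp add: negligible_iff_null_sets null_sets_completionI)
  then have "negligible ({x\<in>U. h x \<noteq> 0} \<inter> box c d)"
    by (rule negligible_subset) auto
  then show "\<exists>V. openin (top_of_set {x\<in>U. h x \<noteq> 0}) V \<and> x \<in> V \<and> negligible V"
    using cd \<open>x \<in> {x\<in>U. h x \<noteq> 0}\<close> by (intro exI[of _ "{x\<in>U. h x \<noteq> 0} \<inter> box c d"]) auto
qed

theorem fundamental_lemma_calculus_of_variations:
  fixes w :: "real^'n::finite \<Rightarrow> real"
  assumes S: "S \<in> sets lebesgue" and w: "integrable (lebesgue_on S) w" and U: "open U"
    and orth: "\<And>\<phi>. test_fun U \<phi> \<Longrightarrow> (LINT x|lebesgue_on S. w x * \<phi> x) = 0"
  shows "AE x in lebesgue_on S. x \<in> U \<longrightarrow> w x = 0"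
proof -
  define w' where "w' x = indicator S x * w x" for x
  have w'i: "integrable lebesgue w'"
    using w integrable_restrict_space[of S lebesgue w] S by (simp add: w'_def[abs_def])
  obtain h where hb: "h \<in> borel_measurable lborel" and ae: "AE x in lborel. w' x = h x"
    using completion_ex_borel_measurable_real[of w' lborel] w'i by auto
  have hbL: "h \<in> borel_measurable lebesgue" using hb by (rule measurable_completion)
  have aeL: "AE x in lebesgue. w' x = h x" by (rule AE_completion[OF ae])
  have "integrable lebesgue h"
    using integrable_cong_AE[OF _ hbL aeL] w'i by auto
  then have hi: "integrable lborel h" using integrable_completion[OF hb] by simp
  have "(LINT x|lborel. h x * indicator (box a b) x) = 0"
    if "box a b \<noteq> {}" "cbox a b \<subseteq> U" for a b
  proof -
    have ib: "indicator (box a b) \<in> borel_measurable lborel" by simp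
    have "(LINT x|lborel. h x * indicator (box a b) x) = (LINT x|lebesgue. h x * indicator (box a b) x)"
      using hb ib by (intro integral_completion[symmetric] borel_measurable_times)
    also have "\<dots> = (LINT x|lebesgue. w' x * indicator (box a b) x)"
      using aeL w'i hbL measurable_completion[OF ib]
      by (intro integral_cong_AE borel_measurable_times) auto
    also have "\<dots> = (LINT x|lebesgue_on S. w x * indicator (box a b) x)"
      using S by (subst integral_restrict_space) (auto simp: w'_def mult.assoc)
    also have "\<dots> = 0" by (rule integral_indicator_box_eq_0[OF w orth that])
    finally show ?thesis .
  qed
  then have "negligible {x\<in>U. h x \<noteq> 0}"
    using hb hi U by (intro negligible_nonzero_if_box_integrals_vanish) auto
  then have "AE x in lebesgue. x \<notin> {x\<in>U. h x \<noteq> 0}"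
    by (intro AE_not_in) (simp add: negligible_iff_null_sets)
  then have "AE x in lebesgue. x \<in> S \<longrightarrow> x \<in> U \<longrightarrow> w x = 0"
    using aeL by eventually_elim (auto simp: w'_def)
  then show ?thesis using S by (subst AE_restrict_space_iff) auto
qed

section \<open>Integration by parts against compactly supported functions\<close>

lemma has_real_derivative_along_axis:
  fixes \<psi> :: "real^'n::finite \<Rightarrow> real"
  assumes "\<And>x. \<psi> differentiable (at x)"
  shows "((\<lambda>s. \<psi> (y + s *\<^sub>R axis i 1)) has_real_derivative pderiv_i i \<psi> (y + s *\<^sub>R axis i 1)) (at s)"
proof -
  let ?D = "frechet_derivative \<psi> (at (y + s *\<^sub>R axis i 1))"
  have D: "(\<psi> has_derivative ?D) (at (y + s *\<^sub>R axis i 1))"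
    using assms frechet_derivative_works by blast
  have "((\<lambda>s. y + s *\<^sub>R axis i 1) has_derivative (\<lambda>h. h *\<^sub>R axis i 1)) (at s)"
    by (auto intro!: derivative_eq_intros)
  from diff_chain_at[OF this D]
  have "((\<lambda>s. \<psi> (y + s *\<^sub>R axis i 1)) has_derivative (\<lambda>h. ?D (h *\<^sub>R axis i 1))) (at s)"
    by (simp add: o_def)
  moreover have "(\<lambda>h. ?D (h *\<^sub>R axis i 1)) = (*) (?D (axis i 1))"
    using has_derivative_linear[OF D] by (auto simp: linear_scale mult.commute)
  ultimately show ?thesis by (simp add: has_field_derivative_def pderiv_i_def)
qed

lemma abs_difference_quotient_le:
  fixes \<psi> :: "real^'n::finite \<Rightarrow> real"
  assumes dif: "\<And>x. \<psi> differentiable (at x)" and M: "\<And>x. \<bar>pderiv_i i \<psi> x\<bar> \<le> M"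
    and R: "\<And>x. \<psi> x \<noteq> 0 \<Longrightarrow> norm x \<le> R" and h: "0 < h" "h \<le> 1"
  shows "\<bar>(\<psi> (x + h *\<^sub>R axis i 1) - \<psi> x) / h\<bar> \<le> indicator (cball 0 (R + 1)) x * M"
proof (cases "x \<in> cball 0 (R + 1)")
  case True
  obtain z where "\<psi> (x + h *\<^sub>R axis i 1) - \<psi> (x + 0 *\<^sub>R axis i 1) = (h - 0) * pderiv_i i \<psi> (x + z *\<^sub>R axis i 1)"
    using MVT2[OF h(1), of "\<lambda>s. \<psi> (x + s *\<^sub>R axis i 1)" "\<lambda>s. pderiv_i i \<psi> (x + s *\<^sub>R axis i 1)"]
      has_real_derivative_along_axis[OF dif] by blast
  then have "(\<psi> (x + h *\<^sub>R axis i 1) - \<psi> x) / h = pderiv_i i \<psi> (x + z *\<^sub>R axis i 1)"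
    using h(1) by simp
  then show ?thesis using True M[of "x + z *\<^sub>R axis i 1"] by simp
next
  case False
  have "norm (h *\<^sub>R (axis i 1 :: real^'n)) \<le> 1" using h by simp
  then have "norm (x + h *\<^sub>R axis i 1) > R" "norm x > R"
    using False norm_triangle_ineq2[of x "- (h *\<^sub>R axis i 1)"] by auto
  then have "\<psi> (x + h *\<^sub>R axis i 1) = 0" "\<psi> x = 0" by (meson R not_le)+
  then show ?thesis using False by simp
qed

lemma difference_quotient_tendsto_pderiv_i:
  fixes \<psi> :: "real^'n::finite \<Rightarrow> real"
  assumes "\<And>x. \<psi> differentiable (at x)" and "filterlim h (at 0) sequentially"
  shows "(\<lambda>k. (\<psi> (x + h k *\<^sub>R axis i 1) - \<psi> x) / h k) \<longlonglongrightarrow> pderiv_i i \<psi> x"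
proof -
  have "((\<lambda>s. \<psi> (x + s *\<^sub>R axis i 1)) has_real_derivative pderiv_i i \<psi> (x + 0 *\<^sub>R axis i 1)) (at 0)"
    by (rule has_real_derivative_along_axis[OF assms(1)])
  then have "((\<lambda>s. (\<psi> (x + s *\<^sub>R axis i 1) - \<psi> x) / s) \<longlongrightarrow> pderiv_i i \<psi> x) (at 0)"
    by (simp add: DERIV_def)
  from filterlim_compose[OF this assms(2)] show ?thesis by (simp add: o_def)
qed

lemma lborel_integral_translate:
  fixes f :: "real^'n::finite \<Rightarrow> real"
  assumes "f \<in> borel_measurable borel"
  shows "(LINT x|lborel. f (x + c)) = (LINT x|lborel. f x)"
proof -
  have "(LINT x|lborel. f x) = (LINT x|distr lborel borel ((+) c). f x)" by (simp add: lborel_distr_plus)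
  also have "\<dots> = (LINT x|lborel. f (c + x))" using assms by (subst integral_distr) auto
  finally show ?thesis by (simp add: add.commute)
qed

text \<open>The integrals of the difference quotients vanish by translation invariance, and they converge
  to that of the partial derivative by dominated convergence (the mean value theorem bounds them).\<close>

lemma integral_pderiv_i_eq_0:
  fixes \<psi> :: "real^'n::finite \<Rightarrow> real"
  assumes C1: "Ck 1 \<psi>" and K: "compact (closure {x. \<psi> x \<noteq> 0})"
  shows "integrable lborel (pderiv_i i \<psi>)" "(LINT x|lborel. pderiv_i i \<psi> x) = 0"
proof -
  let ?e = "axis i 1 :: real^'n" and ?g = "pderiv_i i \<psi>"
  have "Ck (Suc 0) \<psi>" using C1 by simp
  then have cont: "continuous_on UNIV \<psi>" and dif: "\<And>x. \<psi> differentiable (at x)"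
    and gc: "continuous_on UNIV ?g"
    unfolding Ck.simps by blast+
  have g0: "x \<notin> closure {x. \<psi> x \<noteq> 0} \<Longrightarrow> ?g x = 0" for x by (rule pderiv_i_outside_support)
  show gi: "integrable lborel ?g" by (rule integrable_lborel_if_compact_support[OF gc K g0])
  obtain M where M: "\<And>x. \<bar>?g x\<bar> \<le> M" using bounded_if_compact_support[OF gc K g0] by blast
  obtain R where R_closure: "\<And>x. x \<in> closure {x. \<psi> x \<noteq> 0} \<Longrightarrow> norm x \<le> R"
    using compact_imp_bounded[OF K] unfolding bounded_iff by blast
  have R: "\<psi> x \<noteq> 0 \<Longrightarrow> norm x \<le> R" for x
    by (intro R_closure closure_subset[THEN subsetD]) simp
  let ?B = "cball (0::real^'n) (R + 1)"
  define h where "h k = inverse (real (Suc k))" for k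
  have h: "h k > 0" "h k \<le> 1" for k by (auto simp: h_def field_simps)
  define Q where "Q k x = (\<psi> (x + h k *\<^sub>R ?e) - \<psi> x) / h k" for k x
  have Q_bound: "\<bar>Q k x\<bar> \<le> indicator ?B x * M" for k x
    unfolding Q_def by (rule abs_difference_quotient_le[OF dif M R h])
  have "continuous_on UNIV (\<lambda>x. \<psi> (x + h k *\<^sub>R ?e))" for k
    by (rule continuous_on_compose2[OF cont]) (auto intro!: continuous_intros)
  then have "continuous_on UNIV (Q k)" for k
    unfolding Q_def[abs_def] using h(1)[of k] by (intro continuous_intros cont) auto
  moreover have "Q k x = 0" if "x \<notin> ?B" for k x
    using Q_bound[of k x] that by simp
  ultimately have Q_int: "integrable lborel (Q k)" for k
    by (rule integrable_lborel_if_compact_support[OF _ compact_cball])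
  have psi_int: "integrable lborel \<psi>"
    by (rule integrable_lborel_if_compact_support[OF cont K eq_0_outside_support[where \<phi> = \<psi>]])
  have Q_integral: "(LINT x|lborel. Q k x) = 0" for k
  proof -
    have "(\<lambda>x. \<psi> (x + h k *\<^sub>R ?e)) = (\<lambda>x. h k * Q k x + \<psi> x)"
      using h(1)[of k] by (auto simp: Q_def)
    then have "integrable lborel (\<lambda>x. \<psi> (x + h k *\<^sub>R ?e))" using Q_int psi_int by simp
    then have "(LINT x|lborel. Q k x) = ((LINT x|lborel. \<psi> (x + h k *\<^sub>R ?e)) - (LINT x|lborel. \<psi> x)) / h k"
      unfolding Q_def using psi_int by (simp add: Bochner_Integration.integral_diff)
    then show ?thesis
      using lborel_integral_translate[OF borel_measurable_continuous_onI[OF cont]] by simp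
  qed
  have "filterlim h (at 0) sequentially"
    unfolding filterlim_at h_def using LIMSEQ_inverse_real_of_nat by auto
  then have "(\<lambda>k. Q k x) \<longlonglongrightarrow> ?g x" for x
    unfolding Q_def by (rule difference_quotient_tendsto_pderiv_i[OF dif])
  moreover have "integrable lborel (\<lambda>x. indicator ?B x *\<^sub>R M)"
    by (rule borel_integrable_compact) auto
  ultimately have "(\<lambda>k. LINT x|lborel. Q k x) \<longlonglongrightarrow> (LINT x|lborel. ?g x)"
    using Q_int gi Q_bound
    by (intro integral_dominated_convergence[where w = "\<lambda>x. indicator ?B x *\<^sub>R M"]) auto
  then show "(LINT x|lborel. ?g x) = 0" using Q_integral by (simp add: LIMSEQ_const_iff)
qed

text \<open>Integration by parts with \<open>div (a + b x) = n b\<close>: the term \<open>x\<^sub>i \<partial>\<^sub>i \<phi>\<close> is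
  \<open>\<partial>\<^sub>i (x\<^sub>i \<phi>) - \<phi>\<close>.\<close>

lemma integral_affine_inner_grad:
  fixes \<phi> :: "real^'n::finite \<Rightarrow> real"
  assumes sm: "smooth_fun \<phi>" and K: "compact (closure {x. \<phi> x \<noteq> 0})"
  shows "(LINT x|lborel. (a + b *\<^sub>R x) \<bullet> grad \<phi> x) = - (real CARD('n) * b) * (LINT x|lborel. \<phi> x)"
proof -
  let ?K = "closure {x. \<phi> x \<noteq> 0}"
  have C1: "Ck 1 \<phi>" using sm by (simp add: smooth_fun_def)
  then have "Ck (Suc 0) \<phi>" by simp
  then have cont: "continuous_on UNIV \<phi>" and dif: "\<And>x. \<phi> differentiable (at x)"
    unfolding Ck.simps by blast+
  have phi_int: "integrable lborel \<phi>"
    by (rule integrable_lborel_if_compact_support[OF cont K eq_0_outside_support[where \<phi> = \<phi>]])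
  define \<psi> where "\<psi> i x = x $ i * \<phi> x" for i x
  have psi_C1: "Ck 1 (\<psi> i)" for i unfolding \<psi>_def by (intro Ck_mult Ck_component C1)
  have "closure {x. \<psi> i x \<noteq> 0} \<subseteq> ?K" for i by (intro closure_mono) (auto simp: \<psi>_def)
  then have psi_K: "compact (closure {x. \<psi> i x \<noteq> 0})" for i
    using compact_Int_closed[OF K closed_closure] by (metis inf.absorb2)
  note I1 = integral_pderiv_i_eq_0[OF C1 K] and I2 = integral_pderiv_i_eq_0[OF psi_C1 psi_K]
  have "pderiv_i i (\<psi> i) x = x $ i * pderiv_i i \<phi> x + \<phi> x" for i x
    unfolding \<psi>_def
    by (subst pderiv_i_mult) (auto simp: dif pderiv_i_component bounded_linear_imp_differentiable bounded_linear_vec_nth)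
  then have pw: "(a + b *\<^sub>R x) \<bullet> grad \<phi> x
      = (\<Sum>i\<in>UNIV. a $ i * pderiv_i i \<phi> x + b * pderiv_i i (\<psi> i) x - b * \<phi> x)" for x
    by (simp add: inner_vec_def grad_def algebra_simps)
  have "(LINT x|lborel. (a + b *\<^sub>R x) \<bullet> grad \<phi> x)
      = (\<Sum>i\<in>UNIV. LINT x|lborel. a $ i * pderiv_i i \<phi> x + b * pderiv_i i (\<psi> i) x - b * \<phi> x)"
    unfolding pw using I1 I2 phi_int by (intro Bochner_Integration.integral_sum) auto
  also have "\<dots> = (\<Sum>i\<in>(UNIV::'n set). - b * (LINT x|lborel. \<phi> x))"
    using I1 I2 phi_int by (intro sum.cong) auto
  finally show ?thesis by simp
qed

section \<open>Weak divergence on a bounded open set\<close>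

lemma L2_add:
  assumes "L2 \<Omega> f" "L2 \<Omega> g"
  shows "L2 \<Omega> (\<lambda>x. f x + g x)"
proof -
  have fm: "f \<in> borel_measurable (lebesgue_on \<Omega>)" and gm: "g \<in> borel_measurable (lebesgue_on \<Omega>)"
    and fi: "integrable (lebesgue_on \<Omega>) (\<lambda>x. (f x)\<^sup>2)" and gi: "integrable (lebesgue_on \<Omega>) (\<lambda>x. (g x)\<^sup>2)"
    using assms unfolding L2_def by auto
  have "integrable (lebesgue_on \<Omega>) (\<lambda>x. (f x + g x)\<^sup>2)"
  proof (rule Bochner_Integration.integrable_bound[where f = "\<lambda>x. 2 * (f x)\<^sup>2 + 2 * (g x)\<^sup>2"])
    show "integrable (lebesgue_on \<Omega>) (\<lambda>x. 2 * (f x)\<^sup>2 + 2 * (g x)\<^sup>2)" using fi gi by auto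
    show "(\<lambda>x. (f x + g x)\<^sup>2) \<in> borel_measurable (lebesgue_on \<Omega>)" using fm gm by measurable
    have "(f x + g x)\<^sup>2 \<le> 2 * (f x)\<^sup>2 + 2 * (g x)\<^sup>2" for x
      using zero_le_power2[of "f x - g x"] by (simp add: power2_eq_square algebra_simps)
    then show "AE x in lebesgue_on \<Omega>. norm ((f x + g x)\<^sup>2) \<le> norm (2 * (f x)\<^sup>2 + 2 * (g x)\<^sup>2)"
      by simp
  qed
  then show ?thesis using fm gm unfolding L2_def by auto
qed

lemma L2_uminus: "L2 \<Omega> f \<Longrightarrow> L2 \<Omega> (\<lambda>x. - f x)"
  unfolding L2_def by (auto intro: borel_measurable_uminus)

lemma L2_zero: "L2 \<Omega> (\<lambda>x. 0)"
  unfolding L2_def by simp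

lemma L2_has_weak_div_wdiv:
  assumes "\<sigma> \<in> Hdiv \<Omega>"
  shows "L2 \<Omega> (wdiv \<Omega> \<sigma>) \<and> has_weak_div \<Omega> \<sigma> (wdiv \<Omega> \<sigma>)"
proof -
  have "\<exists>w. L2 \<Omega> w \<and> has_weak_div \<Omega> \<sigma> w" using assms unfolding Hdiv_def by blast
  then show ?thesis unfolding wdiv_def by (rule someI_ex)
qed

lemma has_weak_div_uminus:
  "has_weak_div \<Omega> \<sigma> w \<Longrightarrow> has_weak_div \<Omega> (\<lambda>x. - \<sigma> x) (\<lambda>x. - w x)"
  unfolding has_weak_div_def by simp

lemma Hdiv_uminus: "\<sigma> \<in> Hdiv \<Omega> \<Longrightarrow> (\<lambda>x. - \<sigma> x) \<in> Hdiv \<Omega>"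
  unfolding Hdiv_def L2v_def by (auto intro: L2_uminus has_weak_div_uminus)

lemma has_weak_div_zero: "has_weak_div \<Omega> (\<lambda>x. 0) (\<lambda>x. 0)"
  unfolding has_weak_div_def by simp

lemma Hdiv_zero: "(\<lambda>x. 0) \<in> Hdiv \<Omega>"
  unfolding Hdiv_def L2v_def using L2_zero has_weak_div_zero by auto

locale bounded_open_domain =
  fixes \<Omega> :: "(real^'n::finite) set"
  assumes open_domain: "open \<Omega>" and bounded_domain: "bounded \<Omega>"
begin

lemma lmeasurable_domain: "\<Omega> \<in> lmeasurable"
  using lmeasurable_open[OF bounded_domain open_domain] .

lemma sets_lebesgue_domain: "\<Omega> \<in> sets lebesgue"
  using lmeasurable_domain by (simp add: fmeasurableD)

lemma finite_measure_domain: "finite_measure (lebesgue_on \<Omega>)"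
  using finite_measure_lebesgue_on[OF lmeasurable_domain] .

lemma integrable_const_domain: "integrable (lebesgue_on \<Omega>) (\<lambda>x. c::real)"
  using finite_measure_domain finite_measure.integrable_const by blast

lemma L2_imp_integrable: "L2 \<Omega> f \<Longrightarrow> integrable (lebesgue_on \<Omega>) f"
  unfolding L2_def using finite_measure.square_integrable_imp_integrable[OF finite_measure_domain] by blast

lemma integrable_inner_grad:
  assumes \<sigma>: "L2v \<Omega> \<sigma>" and \<phi>: "test_fun U \<phi>"
  shows "integrable (lebesgue_on \<Omega>) (\<lambda>x. \<sigma> x \<bullet> grad \<phi> x)"
proof -
  have "integrable (lebesgue_on \<Omega>) (\<lambda>x. \<sigma> x $ i * pderiv_i i \<phi> x)" for i
  proof -
    obtain C where C: "\<And>x. \<bar>pderiv_i i \<phi> x\<bar> \<le> C" using test_fun_pderiv_i(2)[OF \<phi>] by blast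
    show ?thesis
      using \<sigma> unfolding L2v_def
      by (intro integrable_mult_bounded[OF _ _ C] L2_imp_integrable borel_measurable_lebesgue_onI
          borel_measurable_continuous_onI test_fun_pderiv_i(1)[OF \<phi>]) auto
  qed
  then show ?thesis unfolding inner_grad by auto
qed

lemma integral_domain_eq_lborel:
  fixes F :: "real^'n \<Rightarrow> real"
  assumes "F \<in> borel_measurable borel" and "\<And>x. x \<notin> \<Omega> \<Longrightarrow> F x = 0"
  shows "(LINT x|lebesgue_on \<Omega>. F x) = (LINT x|lborel. F x)"
proof -
  have "(LINT x|lebesgue_on \<Omega>. F x) = (LINT x|lebesgue. indicator \<Omega> x *\<^sub>R F x)"
    using sets_lebesgue_domain by (subst integral_restrict_space) auto
  also have "\<dots> = (LINT x|lebesgue. F x)"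
    using assms(2) by (intro Bochner_Integration.integral_cong) (auto split: split_indicator)
  also have "\<dots> = (LINT x|lborel. F x)" using assms(1) by (intro integral_completion) simp
  finally show ?thesis .
qed

lemma has_weak_div_unique:
  assumes "has_weak_div \<Omega> \<sigma> w1" "has_weak_div \<Omega> \<sigma> w2" "L2 \<Omega> w1" "L2 \<Omega> w2"
  shows "AE x in lebesgue_on \<Omega>. w1 x = w2 x"
proof -
  have i1: "integrable (lebesgue_on \<Omega>) w1" and i2: "integrable (lebesgue_on \<Omega>) w2"
    using assms L2_imp_integrable by auto
  have "AE x in lebesgue_on \<Omega>. x \<in> \<Omega> \<longrightarrow> w1 x - w2 x = 0"
  proof (rule fundamental_lemma_calculus_of_variations[OF sets_lebesgue_domain _ open_domain])
    show "integrable (lebesgue_on \<Omega>) (\<lambda>x. w1 x - w2 x)" using i1 i2 by auto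
    fix \<phi> assume \<phi>: "test_fun \<Omega> \<phi>"
    have "(LINT x|lebesgue_on \<Omega>. (w1 x - w2 x) * \<phi> x)
        = (LINT x|lebesgue_on \<Omega>. w1 x * \<phi> x) - (LINT x|lebesgue_on \<Omega>. w2 x * \<phi> x)"
      using integrable_mult_test_fun[OF i1 \<phi>] integrable_mult_test_fun[OF i2 \<phi>]
      by (simp add: left_diff_distrib)
    also have "\<dots> = 0" using assms(1,2) \<phi> unfolding has_weak_div_def by force
    finally show "(LINT x|lebesgue_on \<Omega>. (w1 x - w2 x) * \<phi> x) = 0" .
  qed
  then show ?thesis by (rule AE_mp[OF _ AE_I2]) auto
qed

lemma wdiv_eq_AE:
  "\<sigma> \<in> Hdiv \<Omega> \<Longrightarrow> has_weak_div \<Omega> \<sigma> w \<Longrightarrow> L2 \<Omega> w \<Longrightarrow> AE x in lebesgue_on \<Omega>. wdiv \<Omega> \<sigma> x = w x"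
  using has_weak_div_unique L2_has_weak_div_wdiv by blast

lemma Hdiv_add:
  assumes \<sigma>: "\<sigma> \<in> Hdiv \<Omega>" and \<tau>: "\<tau> \<in> Hdiv \<Omega>"
  shows "(\<lambda>x. \<sigma> x + \<tau> x) \<in> Hdiv \<Omega>"
proof -
  have w\<sigma>: "L2 \<Omega> (wdiv \<Omega> \<sigma>)" "has_weak_div \<Omega> \<sigma> (wdiv \<Omega> \<sigma>)"
    and w\<tau>: "L2 \<Omega> (wdiv \<Omega> \<tau>)" "has_weak_div \<Omega> \<tau> (wdiv \<Omega> \<tau>)"
    using L2_has_weak_div_wdiv[OF \<sigma>] L2_has_weak_div_wdiv[OF \<tau>] by auto
  have L\<sigma>: "L2v \<Omega> \<sigma>" and L\<tau>: "L2v \<Omega> \<tau>" using \<sigma> \<tau> by (auto simp: Hdiv_def)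
  have "has_weak_div \<Omega> (\<lambda>x. \<sigma> x + \<tau> x) (\<lambda>x. wdiv \<Omega> \<sigma> x + wdiv \<Omega> \<tau> x)"
    unfolding has_weak_div_def
  proof (intro allI impI)
    fix \<phi> assume \<phi>: "test_fun \<Omega> \<phi>"
    have "(LINT x|lebesgue_on \<Omega>. (\<sigma> x + \<tau> x) \<bullet> grad \<phi> x)
        = (LINT x|lebesgue_on \<Omega>. \<sigma> x \<bullet> grad \<phi> x) + (LINT x|lebesgue_on \<Omega>. \<tau> x \<bullet> grad \<phi> x)"
      using integrable_inner_grad[OF L\<sigma> \<phi>] integrable_inner_grad[OF L\<tau> \<phi>] by (simp add: inner_add_left)
    also have "\<dots> = - (LINT x|lebesgue_on \<Omega>. wdiv \<Omega> \<sigma> x * \<phi> x) - (LINT x|lebesgue_on \<Omega>. wdiv \<Omega> \<tau> x * \<phi> x)"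
      using w\<sigma>(2) w\<tau>(2) \<phi> unfolding has_weak_div_def by simp
    also have "\<dots> = - (LINT x|lebesgue_on \<Omega>. (wdiv \<Omega> \<sigma> x + wdiv \<Omega> \<tau> x) * \<phi> x)"
      using integrable_mult_test_fun[OF L2_imp_integrable[OF w\<sigma>(1)] \<phi>]
        integrable_mult_test_fun[OF L2_imp_integrable[OF w\<tau>(1)] \<phi>]
      by (simp add: distrib_right)
    finally show "(LINT x|lebesgue_on \<Omega>. (\<sigma> x + \<tau> x) \<bullet> grad \<phi> x)
        = - (LINT x|lebesgue_on \<Omega>. (wdiv \<Omega> \<sigma> x + wdiv \<Omega> \<tau> x) * \<phi> x)" .
  qed
  moreover have "L2v \<Omega> (\<lambda>x. \<sigma> x + \<tau> x)"
    using L\<sigma> L\<tau> unfolding L2v_def by (auto intro: L2_add)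
  ultimately show ?thesis using L2_add[OF w\<sigma>(1) w\<tau>(1)] unfolding Hdiv_def by blast
qed

lemma wdiv_uminus_AE:
  "\<tau> \<in> Hdiv \<Omega> \<Longrightarrow> AE x in lebesgue_on \<Omega>. wdiv \<Omega> (\<lambda>y. - \<tau> y) x = - wdiv \<Omega> \<tau> x"
  using wdiv_eq_AE[OF Hdiv_uminus has_weak_div_uminus L2_uminus] L2_has_weak_div_wdiv by blast

lemma wdiv_zero_AE: "AE x in lebesgue_on \<Omega>. wdiv \<Omega> (\<lambda>y. 0) x = 0"
  using wdiv_eq_AE[OF Hdiv_zero has_weak_div_zero L2_zero] .

text \<open>Testing only with functions supported in \<open>V\<close>, where \<open>integral_affine_inner_grad\<close> applies.\<close>

lemma wdiv_affine_AE:
  fixes a :: "real^'n" and b :: real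
  assumes \<sigma>: "\<sigma> \<in> Hdiv \<Omega>" and V: "open V" and affine: "\<forall>x\<in>V. \<sigma> x = a + b *\<^sub>R x"
  shows "AE x in lebesgue_on \<Omega>. x \<in> V \<longrightarrow> wdiv \<Omega> \<sigma> x = real CARD('n) * b"
proof -
  let ?n = "real CARD('n)"
  have w: "L2 \<Omega> (wdiv \<Omega> \<sigma>)" "has_weak_div \<Omega> \<sigma> (wdiv \<Omega> \<sigma>)" using L2_has_weak_div_wdiv[OF \<sigma>] by auto
  have wi: "integrable (lebesgue_on \<Omega>) (wdiv \<Omega> \<sigma>)" using L2_imp_integrable[OF w(1)] .
  have "AE x in lebesgue_on \<Omega>. x \<in> V \<inter> \<Omega> \<longrightarrow> wdiv \<Omega> \<sigma> x - ?n * b = 0"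
  proof (rule fundamental_lemma_calculus_of_variations[OF sets_lebesgue_domain])
    show "integrable (lebesgue_on \<Omega>) (\<lambda>x. wdiv \<Omega> \<sigma> x - ?n * b)"
      using wi integrable_const_domain by auto
    show "open (V \<inter> \<Omega>)" using V open_domain by auto
    fix \<phi> assume \<phi>V: "test_fun (V \<inter> \<Omega>) \<phi>"
    let ?supp = "closure {x. \<phi> x \<noteq> 0}"
    have \<phi>: "test_fun \<Omega> \<phi>" using test_fun_mono[OF \<phi>V] by auto
    have sm: "smooth_fun \<phi>" and K: "compact ?supp" and supp: "?supp \<subseteq> V \<inter> \<Omega>"
      using \<phi>V by (auto simp: test_fun_def)
    have "\<sigma> x \<bullet> grad \<phi> x = (a + b *\<^sub>R x) \<bullet> grad \<phi> x" for x
    proof (cases "x \<in> ?supp")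
      case True
      then show ?thesis using supp affine by auto
    next
      case False
      then show ?thesis by (simp add: grad_outside_support)
    qed
    then have "(LINT x|lebesgue_on \<Omega>. \<sigma> x \<bullet> grad \<phi> x) = (LINT x|lebesgue_on \<Omega>. (a + b *\<^sub>R x) \<bullet> grad \<phi> x)"
      by simp
    also have "\<dots> = (LINT x|lborel. (a + b *\<^sub>R x) \<bullet> grad \<phi> x)"
    proof (rule integral_domain_eq_lborel)
      show "(\<lambda>x. (a + b *\<^sub>R x) \<bullet> grad \<phi> x) \<in> borel_measurable borel"
        unfolding inner_grad using test_fun_pderiv_i(1)[OF \<phi>]
        by (intro borel_measurable_continuous_onI continuous_intros) auto
      show "(a + b *\<^sub>R x) \<bullet> grad \<phi> x = 0" if "x \<notin> \<Omega>" for x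
      proof -
        have "x \<notin> ?supp" using that supp by blast
        then show ?thesis by (simp add: grad_outside_support)
      qed
    qed
    also have "\<dots> = - (?n * b) * (LINT x|lborel. \<phi> x)" by (rule integral_affine_inner_grad[OF sm K])
    also have "(LINT x|lborel. \<phi> x) = (LINT x|lebesgue_on \<Omega>. \<phi> x)"
    proof (rule integral_domain_eq_lborel[symmetric])
      show "\<phi> \<in> borel_measurable borel"
        by (rule borel_measurable_continuous_onI[OF test_fun_continuous_on[OF \<phi>]])
      show "\<phi> x = 0" if "x \<notin> \<Omega>" for x
        using that supp by (blast intro: eq_0_outside_support)
    qed
    finally have "- (LINT x|lebesgue_on \<Omega>. wdiv \<Omega> \<sigma> x * \<phi> x) = - (?n * b) * (LINT x|lebesgue_on \<Omega>. \<phi> x)"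
      using w(2) \<phi> unfolding has_weak_div_def by metis
    moreover have "integrable (lebesgue_on \<Omega>) (\<lambda>x. wdiv \<Omega> \<sigma> x * \<phi> x)"
      by (rule integrable_mult_test_fun[OF wi \<phi>])
    moreover have "integrable (lebesgue_on \<Omega>) (\<lambda>x. ?n * b * \<phi> x)"
      using integrable_mult_test_fun[OF integrable_const_domain \<phi>] by blast
    ultimately show "(LINT x|lebesgue_on \<Omega>. (wdiv \<Omega> \<sigma> x - ?n * b) * \<phi> x) = 0"
      by (simp add: left_diff_distrib)
  qed
  then show ?thesis by (rule AE_mp[OF _ AE_I2]) auto
qed

end

section \<open>Piecewise constant functions on a simplicial mesh\<close>

lemma borel_measurable_lebesgue_on_AE:
  fixes f g :: "real^'n::finite \<Rightarrow> real"
  assumes S: "S \<in> sets lebesgue" and f: "f \<in> borel_measurable (lebesgue_on S)"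
    and ae: "AE x in lebesgue_on S. f x = g x"
  shows "g \<in> borel_measurable (lebesgue_on S)"
proof -
  have "(\<lambda>x. if x \<in> S then f x else 0) \<in> borel_measurable lebesgue"
    using borel_measurable_if[OF S] f by blast
  moreover have "AE x in lebesgue. (if x \<in> S then f x else 0) = (if x \<in> S then g x else 0)"
    using ae S by (subst (asm) AE_restrict_space_iff) (auto elim: AE_mp)
  ultimately have "(\<lambda>x. if x \<in> S then g x else 0) \<in> borel_measurable lebesgue"
    by (rule borel_measurable_AE)
  then show ?thesis using borel_measurable_if[OF S] by blast
qed

definition pw_const :: "(real^'n::finite) set set \<Rightarrow> ((real^'n) set \<Rightarrow> real) \<Rightarrow> real^'n \<Rightarrow> real" where
  "pw_const \<T> c x = (\<Sum>T\<in>\<T>. c T * indicator (interior T) x)"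

definition elem_val :: "(real^'n::finite) set \<Rightarrow> (real^'n \<Rightarrow> real) \<Rightarrow> real" where
  "elem_val T v = v (SOME x. x \<in> interior T)"

lemma P0_add: "v \<in> P0 \<T> \<Longrightarrow> w \<in> P0 \<T> \<Longrightarrow> (\<lambda>x. v x + w x) \<in> P0 \<T>"
  unfolding P0_def by auto metis

lemma P0_diff: "v \<in> P0 \<T> \<Longrightarrow> w \<in> P0 \<T> \<Longrightarrow> (\<lambda>x. v x - w x) \<in> P0 \<T>"
  unfolding P0_def by auto metis

lemma P0_const: "(\<lambda>x. c) \<in> P0 \<T>"
  unfolding P0_def by auto

lemma RT0_uminus:
  assumes \<sigma>: "\<sigma> \<in> RT0 \<T> \<Omega>"
  shows "(\<lambda>x. - \<sigma> x) \<in> RT0 \<T> \<Omega>"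
proof -
  have "\<exists>a b. \<forall>x\<in>interior T. - \<sigma> x = a + b *\<^sub>R x" if T: "T \<in> \<T>" for T
  proof -
    obtain a b where "\<forall>x\<in>interior T. \<sigma> x = a + b *\<^sub>R x" using \<sigma> T unfolding RT0_def by blast
    then show ?thesis by (intro exI[of _ "- a"] exI[of _ "- b"]) simp
  qed
  then show ?thesis using \<sigma> Hdiv_uminus unfolding RT0_def by blast
qed

locale simplicial_mesh = bounded_open_domain \<Omega> for \<Omega> :: "(real^'n::finite) set" +
  fixes \<T> :: "(real^'n) set set"
  assumes mesh: "conforming_simplicial_mesh \<T> \<Omega>"
begin

lemma finite_mesh: "finite \<T>"
  using mesh by (simp add: conforming_simplicial_mesh_def)

lemma element_simplex: "T \<in> \<T> \<Longrightarrow> int CARD('n) simplex T"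
  using mesh by (simp add: conforming_simplicial_mesh_def)

lemma Union_mesh: "\<Union>\<T> = closure \<Omega>"
  using mesh by (simp add: conforming_simplicial_mesh_def)

lemma element_Int_face_of: "T1 \<in> \<T> \<Longrightarrow> T2 \<in> \<T> \<Longrightarrow> (T1 \<inter> T2) face_of T1"
  using mesh by (simp add: conforming_simplicial_mesh_def)

lemma interior_element_unique:
  assumes "T \<in> \<T>" "T' \<in> \<T>" "x \<in> interior T" "x \<in> interior T'"
  shows "T = T'"
proof -
  have "T \<subseteq> T \<inter> T'"
    using subset_of_face_of[OF element_Int_face_of[OF assms(1,2)], of T] assms
      interior_subset_rel_interior interior_subset by blast
  moreover have "T' \<subseteq> T' \<inter> T"
    using subset_of_face_of[OF element_Int_face_of[OF assms(2,1)], of T'] assms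
      interior_subset_rel_interior interior_subset by blast
  ultimately show ?thesis by blast
qed

lemma interior_element_nonempty:
  assumes T: "T \<in> \<T>"
  shows "interior T \<noteq> {}"
proof -
  have "aff_dim T = int DIM(real^'n)" using aff_dim_simplex[OF element_simplex[OF T]] by simp
  then have "affine hull T = UNIV" using aff_dim_eq_full by blast
  then have "rel_interior T = interior T" by (rule rel_interior_interior)
  moreover have "T \<noteq> {}" using element_simplex[OF T] simplex_empty by force
  then have "rel_interior T \<noteq> {}"
    using rel_interior_eq_empty[OF convex_simplex[OF element_simplex[OF T]]] by simp
  ultimately show ?thesis by simp
qed

lemma some_in_interior_element: "T \<in> \<T> \<Longrightarrow> (SOME x. x \<in> interior T) \<in> interior T"
  using interior_element_nonempty some_in_eq by blast

text \<open>Element boundaries are null sets.\<close>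

lemma AE_in_interior_element: "AE x in lebesgue_on \<Omega>. \<exists>T\<in>\<T>. x \<in> interior T"
proof -
  have "negligible (\<Union>(frontier ` \<T>))"
    using finite_mesh by (auto intro!: negligible_Union negligible_convex_frontier convex_simplex element_simplex)
  then have "AE x in lebesgue. x \<notin> \<Union>(frontier ` \<T>)"
    by (intro AE_not_in) (simp add: negligible_iff_null_sets)
  then have "AE x in lebesgue. x \<in> \<Omega> \<longrightarrow> (\<exists>T\<in>\<T>. x \<in> interior T)"
  proof (rule AE_mp[OF _ AE_I2], intro impI)
    fix x assume x: "x \<notin> \<Union>(frontier ` \<T>)" "x \<in> \<Omega>"
    then obtain T where T: "T \<in> \<T>" "x \<in> T" using Union_mesh closure_subset by blast
    then have "x \<in> interior T"
      using x closed_simplex[OF element_simplex[OF T(1)]] by (auto simp: frontier_def)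
    then show "\<exists>T\<in>\<T>. x \<in> interior T" using T by blast
  qed
  then show ?thesis using sets_lebesgue_domain by (subst AE_restrict_space_iff) auto
qed

lemma pw_const_eq:
  assumes "T \<in> \<T>" "x \<in> interior T"
  shows "pw_const \<T> c x = c T"
proof -
  have "pw_const \<T> c x = (\<Sum>T'\<in>\<T>. if T' = T then c T else 0)"
    unfolding pw_const_def using assms interior_element_unique
    by (intro sum.cong) (auto split: split_indicator)
  then show ?thesis using assms finite_mesh by simp
qed

lemma pw_const_in_P0: "pw_const \<T> c \<in> P0 \<T>"
  unfolding P0_def using pw_const_eq by blast

lemma elem_val_pw_const: "T \<in> \<T> \<Longrightarrow> elem_val T (pw_const \<T> c) = c T"
  unfolding elem_val_def using pw_const_eq some_in_interior_element by blast

lemma elem_val_eq: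
  assumes "v \<in> P0 \<T>" "T \<in> \<T>" "x \<in> interior T"
  shows "v x = elem_val T v"
proof -
  obtain c where "\<forall>y\<in>interior T. v y = c" using assms(1,2) unfolding P0_def by blast
  then show ?thesis using assms(3) some_in_interior_element[OF assms(2)] by (simp add: elem_val_def)
qed

lemma indicator_interior_eq_pw_const:
  assumes "T \<in> \<T>"
  shows "indicator (interior T) = pw_const \<T> (\<lambda>T'. if T' = T then 1 else 0)"
proof -
  have "pw_const \<T> (\<lambda>T'. if T' = T then 1 else 0) x
      = (\<Sum>T'\<in>\<T>. if T' = T then indicator (interior T) x else 0)" for x
    unfolding pw_const_def by (intro sum.cong) auto
  then show ?thesis using assms finite_mesh by (simp add: fun_eq_iff)
qed

lemma borel_measurable_pw_const: "pw_const \<T> c \<in> borel_measurable (lebesgue_on S)"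
  unfolding pw_const_def[abs_def]
  by (intro borel_measurable_lebesgue_onI borel_measurable_sum borel_measurable_times
      borel_measurable_const borel_measurable_indicator) auto

lemma abs_pw_const_le: "\<bar>pw_const \<T> c x\<bar> \<le> (\<Sum>T\<in>\<T>. \<bar>c T\<bar>)"
  unfolding pw_const_def by (rule order_trans[OF sum_abs sum_mono]) (auto split: split_indicator)

lemma P0_AE_eq_pw_const: "v \<in> P0 \<T> \<Longrightarrow> AE x in lebesgue_on \<Omega>. v x = pw_const \<T> (\<lambda>T. elem_val T v) x"
  using AE_in_interior_element by eventually_elim (auto simp: pw_const_eq elem_val_eq)

lemma P0_borel_measurable:
  assumes "v \<in> P0 \<T>"
  shows "v \<in> borel_measurable (lebesgue_on \<Omega>)"
proof -
  have "AE x in lebesgue_on \<Omega>. pw_const \<T> (\<lambda>T. elem_val T v) x = v x"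
    using P0_AE_eq_pw_const[OF assms] by eventually_elim simp
  then show ?thesis
    by (rule borel_measurable_lebesgue_on_AE[OF sets_lebesgue_domain borel_measurable_pw_const])
qed

lemma integrable_P0_mult:
  assumes v: "v \<in> P0 \<T>" and F: "integrable (lebesgue_on \<Omega>) F"
  shows "integrable (lebesgue_on \<Omega>) (\<lambda>x. v x * F x)"
proof -
  have "integrable (lebesgue_on \<Omega>) (\<lambda>x. F x * pw_const \<T> (\<lambda>T. elem_val T v) x)"
    by (rule integrable_mult_bounded[OF F borel_measurable_pw_const abs_pw_const_le])
  moreover have "AE x in lebesgue_on \<Omega>. F x * pw_const \<T> (\<lambda>T. elem_val T v) x = v x * F x"
    using P0_AE_eq_pw_const[OF v] by eventually_elim simp
  moreover have "(\<lambda>x. v x * F x) \<in> borel_measurable (lebesgue_on \<Omega>)"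
    using P0_borel_measurable[OF v] F by (intro borel_measurable_times) auto
  moreover have "(\<lambda>x. F x * pw_const \<T> (\<lambda>T. elem_val T v) x) \<in> borel_measurable (lebesgue_on \<Omega>)"
    using F by (intro borel_measurable_times borel_measurable_pw_const) auto
  ultimately show ?thesis using integrable_cong_AE by blast
qed

lemma integrable_P0: "v \<in> P0 \<T> \<Longrightarrow> integrable (lebesgue_on \<Omega>) v"
  using integrable_P0_mult[OF _ integrable_const_domain, of v 1] by simp

definition elem_integral :: "(real^'n) set \<Rightarrow> (real^'n \<Rightarrow> real) \<Rightarrow> real" where
  "elem_integral T F = (LINT x|lebesgue_on \<Omega>. indicator (interior T) x * F x)"

definition vol :: "(real^'n) set \<Rightarrow> real" where
  "vol T = elem_integral T (\<lambda>x. 1)"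

lemma borel_measurable_indicator_interior:
  "indicator (interior T) \<in> borel_measurable (lebesgue_on S)"
  by (intro borel_measurable_lebesgue_onI borel_measurable_indicator) simp

lemma integrable_indicator_interior_mult:
  fixes F :: "real^'n \<Rightarrow> real"
  assumes "integrable (lebesgue_on \<Omega>) F"
  shows "integrable (lebesgue_on \<Omega>) (\<lambda>x. indicator (interior T) x * F x)"
proof -
  have "integrable (lebesgue_on \<Omega>) (\<lambda>x. F x * indicator (interior T) x)"
    by (rule integrable_mult_bounded[OF assms borel_measurable_indicator_interior, where C = 1])
       (simp split: split_indicator)
  then show ?thesis by (simp add: mult.commute)
qed

lemma elem_integral_diff:
  assumes "integrable (lebesgue_on \<Omega>) F" "integrable (lebesgue_on \<Omega>) G"
  shows "elem_integral T (\<lambda>x. F x - G x) = elem_integral T F - elem_integral T G"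
  unfolding elem_integral_def
  using integrable_indicator_interior_mult[OF assms(1)] integrable_indicator_interior_mult[OF assms(2)]
  by (simp add: right_diff_distrib)

lemma elem_integral_P0:
  assumes v: "v \<in> P0 \<T>" and T: "T \<in> \<T>"
  shows "elem_integral T v = elem_val T v * vol T"
proof -
  have "elem_integral T v = (LINT x|lebesgue_on \<Omega>. elem_val T v * indicator (interior T) x)"
    unfolding elem_integral_def using elem_val_eq[OF v T]
    by (intro Bochner_Integration.integral_cong) (auto split: split_indicator)
  then show ?thesis by (simp add: vol_def elem_integral_def)
qed

lemma vol_pos:
  assumes T: "T \<in> \<T>"
  shows "vol T > 0"
proof -
  have lm: "\<Omega> \<inter> interior T \<in> lmeasurable"
    using bounded_domain open_domain by (intro lmeasurable_open) (auto intro: bounded_subset)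
  have "vol T = (LINT x|lebesgue. indicator \<Omega> x *\<^sub>R indicator (interior T) x)"
    unfolding vol_def elem_integral_def using sets_lebesgue_domain
    by (subst integral_restrict_space) auto
  also have "\<dots> = (LINT x|lebesgue. indicator (\<Omega> \<inter> interior T) x)"
    by (rule Bochner_Integration.integral_cong) (auto split: split_indicator)
  also have "\<dots> = measure lebesgue (\<Omega> \<inter> interior T)"
    using lm by simp
  finally have vol: "vol T = measure lebesgue (\<Omega> \<inter> interior T)" .
  obtain x where x: "x \<in> interior T" using interior_element_nonempty[OF T] by blast
  then have "x \<in> closure \<Omega>" using T Union_mesh interior_subset by blast
  then have "\<Omega> \<inter> interior T \<noteq> {}"
    using open_Int_closure_eq_empty[of "interior T" \<Omega>] x by auto
  then have "\<not> negligible (\<Omega> \<inter> interior T)"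
    using open_domain by (intro open_not_negligible) auto
  then show ?thesis
    using lm vol negligible_iff_measure0 measure_nonneg[of lebesgue] by (metis order_less_le)
qed

lemma ip_indicator_interior_eq:
  assumes F: "F \<in> borel_measurable (lebesgue_on \<Omega>)"
    and const: "AE x in lebesgue_on \<Omega>. x \<in> interior T \<longrightarrow> F x = c"
  shows "ip \<Omega> F (indicator (interior T)) = c * vol T"
proof -
  have "AE x in lebesgue_on \<Omega>. F x * indicator (interior T) x = c * indicator (interior T) x"
    using const by eventually_elim (auto split: split_indicator)
  then have "ip \<Omega> F (indicator (interior T)) = (LINT x|lebesgue_on \<Omega>. c * indicator (interior T) x)"
    unfolding ip_def using F borel_measurable_indicator_interior
    by (intro integral_cong_AE borel_measurable_times) auto
  then show ?thesis by (simp add: vol_def elem_integral_def)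
qed

lemma ip_P0_eq_sum:
  assumes v: "v \<in> P0 \<T>" and F: "integrable (lebesgue_on \<Omega>) F"
  shows "ip \<Omega> v F = (\<Sum>T\<in>\<T>. elem_val T v * elem_integral T F)"
proof -
  have "AE x in lebesgue_on \<Omega>. v x * F x = pw_const \<T> (\<lambda>T. elem_val T v) x * F x"
    using P0_AE_eq_pw_const[OF v] by eventually_elim simp
  then have "ip \<Omega> v F = (LINT x|lebesgue_on \<Omega>. pw_const \<T> (\<lambda>T. elem_val T v) x * F x)"
    unfolding ip_def using P0_borel_measurable[OF v] F borel_measurable_pw_const
    by (intro integral_cong_AE borel_measurable_times) auto
  also have "\<dots> = (LINT x|lebesgue_on \<Omega>. (\<Sum>T\<in>\<T>. elem_val T v * (indicator (interior T) x * F x)))"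
    unfolding pw_const_def by (simp add: sum_distrib_right mult.assoc)
  also have "\<dots> = (\<Sum>T\<in>\<T>. elem_val T v * elem_integral T F)"
    using integrable_indicator_interior_mult[OF F] by (simp add: elem_integral_def)
  finally show ?thesis .
qed

lemma Pi0_in_P0_orthogonal:
  assumes F: "integrable (lebesgue_on \<Omega>) F"
  shows "Pi0 \<T> \<Omega> F \<in> P0 \<T> \<and> (\<forall>v\<in>P0 \<T>. ip \<Omega> (\<lambda>x. F x - Pi0 \<T> \<Omega> F x) v = 0)"
proof -
  define p where "p = pw_const \<T> (\<lambda>T. elem_integral T F / vol T)"
  have p: "p \<in> P0 \<T>" "integrable (lebesgue_on \<Omega>) p"
    unfolding p_def by (simp_all add: pw_const_in_P0 integrable_P0)
  have orth: "ip \<Omega> (\<lambda>x. F x - p x) v = 0" if v: "v \<in> P0 \<T>" for v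
  proof -
    have "ip \<Omega> (\<lambda>x. F x - p x) v = ip \<Omega> v (\<lambda>x. F x - p x)"
      unfolding ip_def by (simp add: mult.commute)
    also have "\<dots> = (\<Sum>T\<in>\<T>. elem_val T v * elem_integral T (\<lambda>x. F x - p x))"
      using ip_P0_eq_sum[OF v] F p(2) by simp
    also have "\<dots> = 0"
      using elem_integral_diff[OF F p(2)] elem_integral_P0[OF p(1)] elem_val_pw_const vol_pos
      by (intro sum.neutral ballI) (simp add: p_def less_imp_neq[OF vol_pos, symmetric])
    finally show ?thesis .
  qed
  show ?thesis
    unfolding Pi0_def by (rule someI[where x = p]) (use p(1) orth in blast)
qed

lemma indicator_interior_in_P0: "T \<in> \<T> \<Longrightarrow> indicator (interior T) \<in> P0 \<T>"
  using indicator_interior_eq_pw_const pw_const_in_P0 by metis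

lemma Pi0_eq:
  assumes F: "integrable (lebesgue_on \<Omega>) F" and T: "T \<in> \<T>" and x: "x \<in> interior T"
  shows "Pi0 \<T> \<Omega> F x = elem_integral T F / vol T"
proof -
  let ?q = "Pi0 \<T> \<Omega> F"
  have q: "?q \<in> P0 \<T>" and orth: "ip \<Omega> (\<lambda>x. F x - ?q x) (indicator (interior T)) = 0"
    using Pi0_in_P0_orthogonal[OF F] indicator_interior_in_P0[OF T] by auto
  have "ip \<Omega> (\<lambda>x. F x - ?q x) (indicator (interior T)) = elem_integral T (\<lambda>x. F x - ?q x)"
    unfolding ip_def elem_integral_def by (simp add: mult.commute)
  also have "\<dots> = elem_integral T F - elem_val T ?q * vol T"
    using elem_integral_diff[OF F integrable_P0[OF q]] elem_integral_P0[OF q T] by simp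
  finally have "elem_val T ?q = elem_integral T F / vol T"
    using orth vol_pos[OF T] by (simp add: field_simps)
  then show ?thesis using elem_val_eq[OF q T x] by simp
qed

lemma RT0_add:
  assumes \<sigma>: "\<sigma> \<in> RT0 \<T> \<Omega>" and \<tau>: "\<tau> \<in> RT0 \<T> \<Omega>"
  shows "(\<lambda>x. \<sigma> x + \<tau> x) \<in> RT0 \<T> \<Omega>"
proof -
  have "\<exists>a b. \<forall>x\<in>interior T. \<sigma> x + \<tau> x = a + b *\<^sub>R x" if T: "T \<in> \<T>" for T
  proof -
    obtain a1 b1 a2 b2 where "\<forall>x\<in>interior T. \<sigma> x = a1 + b1 *\<^sub>R x" "\<forall>x\<in>interior T. \<tau> x = a2 + b2 *\<^sub>R x"
      using \<sigma> \<tau> T unfolding RT0_def by blast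
    then show ?thesis by (intro exI[of _ "a1 + a2"] exI[of _ "b1 + b2"]) (simp add: scaleR_add_left)
  qed
  then show ?thesis using \<sigma> \<tau> Hdiv_add unfolding RT0_def by blast
qed

lemma wdiv_RT0_piecewise_const:
  assumes \<tau>: "\<tau> \<in> RT0 \<T> \<Omega>"
  obtains c where "AE x in lebesgue_on \<Omega>. \<forall>T\<in>\<T>. x \<in> interior T \<longrightarrow> wdiv \<Omega> \<tau> x = c T"
proof -
  have "\<forall>T\<in>\<T>. \<exists>ab. \<forall>x\<in>interior T. \<tau> x = fst ab + snd ab *\<^sub>R x"
  proof
    fix T assume "T \<in> \<T>"
    then obtain a b where "\<forall>x\<in>interior T. \<tau> x = a + b *\<^sub>R x" using \<tau> unfolding RT0_def by blast
    then show "\<exists>ab. \<forall>x\<in>interior T. \<tau> x = fst ab + snd ab *\<^sub>R x" by (intro exI[of _ "(a, b)"]) simp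
  qed
  then obtain ab where ab: "\<forall>T\<in>\<T>. \<forall>x\<in>interior T. \<tau> x = fst (ab T) + snd (ab T) *\<^sub>R x"
    by (rule bchoice[THEN exE])
  have \<tau>H: "\<tau> \<in> Hdiv \<Omega>" using \<tau> by (simp add: RT0_def)
  have "AE x in lebesgue_on \<Omega>. x \<in> interior T \<longrightarrow> wdiv \<Omega> \<tau> x = real CARD('n) * snd (ab T)"
    if "T \<in> \<T>" for T
    using ab that by (intro wdiv_affine_AE[OF \<tau>H open_interior]) blast
  then have "AE x in lebesgue_on \<Omega>. \<forall>T\<in>\<T>. x \<in> interior T \<longrightarrow> wdiv \<Omega> \<tau> x = real CARD('n) * snd (ab T)"
    using finite_mesh by (subst AE_finite_all) auto
  then show ?thesis by (rule that)
qed

end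

section \<open>Consequences of the discrete variational inequality\<close>

locale discrete_solution = simplicial_mesh \<Omega> \<T>
  for \<Omega> :: "(real^'n::finite) set" and \<T> :: "(real^'n) set set" +
  fixes f g u lam :: "real^'n \<Rightarrow> real" and \<sigma> :: "real^'n \<Rightarrow> real^'n"
  assumes f: "L2 \<Omega> f" and g: "integrable (lebesgue_on \<Omega>) g"
    and sol_K: "(\<sigma>, lam) \<in> Kh \<T> \<Omega>" and sol_M: "u \<in> P0 \<T>"
    and VI: "\<And>(\<tau> :: real^'n \<Rightarrow> real^'n) (\<mu> :: real^'n \<Rightarrow> real). (\<tau>, \<mu>) \<in> Kh \<T> \<Omega> \<Longrightarrow>
      ipv \<Omega> \<sigma> (\<lambda>x. \<tau> x - \<sigma> x) + ip \<Omega> (\<lambda>x. wdiv \<Omega> (\<lambda>y. \<tau> y - \<sigma> y) x + \<mu> x - lam x) u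
        \<ge> ip \<Omega> (\<lambda>x. \<mu> x - lam x) g"
    and EQ: "\<forall>v \<in> P0 \<T>. ip \<Omega> (\<lambda>x. wdiv \<Omega> \<sigma> x + lam x) v = - ip \<Omega> f v"
begin

lemma sol_RT0: "\<sigma> \<in> RT0 \<T> \<Omega>"
  and lam_P0: "lam \<in> P0 \<T>"
  and lam_nonneg: "\<forall>T\<in>\<T>. \<forall>x\<in>interior T. lam x \<ge> 0"
  using sol_K by (auto simp: Kh_def)

lemma sol_Hdiv: "\<sigma> \<in> Hdiv \<Omega>"
  using sol_RT0 by (simp add: RT0_def)

lemma RT0_orthogonality:
  assumes \<tau>: "\<tau> \<in> RT0 \<T> \<Omega>"
  shows "ipv \<Omega> \<sigma> \<tau> + ip \<Omega> (wdiv \<Omega> \<tau>) u = 0"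
proof -
  have \<tau>H: "\<tau> \<in> Hdiv \<Omega>" using \<tau> by (simp add: RT0_def)
  have "(\<lambda>x. \<sigma> x + \<tau> x, lam) \<in> Kh \<T> \<Omega>"
    using RT0_add[OF sol_RT0 \<tau>] lam_P0 lam_nonneg by (simp add: Kh_def)
  from VI[OF this] have "ipv \<Omega> \<sigma> \<tau> + ip \<Omega> (wdiv \<Omega> \<tau>) u \<ge> 0"
    by (simp add: ip_def)
  moreover have "(\<lambda>x. \<sigma> x + - \<tau> x, lam) \<in> Kh \<T> \<Omega>"
    using RT0_add[OF sol_RT0 RT0_uminus[OF \<tau>]] lam_P0 lam_nonneg by (simp add: Kh_def)
  from VI[OF this] have "ipv \<Omega> \<sigma> (\<lambda>x. - \<tau> x) + ip \<Omega> (wdiv \<Omega> (\<lambda>y. - \<tau> y)) u \<ge> 0"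
    by (simp add: ip_def)
  moreover have "ipv \<Omega> \<sigma> (\<lambda>x. - \<tau> x) = - ipv \<Omega> \<sigma> \<tau>"
    unfolding ipv_def by simp
  moreover have "ip \<Omega> (wdiv \<Omega> (\<lambda>y. - \<tau> y)) u = - ip \<Omega> (wdiv \<Omega> \<tau>) u"
  proof -
    have "AE x in lebesgue_on \<Omega>. wdiv \<Omega> (\<lambda>y. - \<tau> y) x * u x = - wdiv \<Omega> \<tau> x * u x"
      using wdiv_uminus_AE[OF \<tau>H] by eventually_elim simp
    then have "ip \<Omega> (wdiv \<Omega> (\<lambda>y. - \<tau> y)) u = (LINT x|lebesgue_on \<Omega>. - wdiv \<Omega> \<tau> x * u x)"
      unfolding ip_def using L2_has_weak_div_wdiv[OF Hdiv_uminus[OF \<tau>H]] L2_has_weak_div_wdiv[OF \<tau>H] P0_borel_measurable[OF sol_M]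
      by (intro integral_cong_AE) (auto simp: L2_def)
    then show ?thesis unfolding ip_def by simp
  qed
  ultimately show ?thesis by linarith
qed

definition gap :: "(real^'n) set \<Rightarrow> real" where
  "gap T = elem_integral T u - elem_integral T g"

lemma multiplier_inequality:
  assumes \<mu>: "\<mu> \<in> P0 \<T>" and \<mu>_nonneg: "\<forall>T\<in>\<T>. \<forall>x\<in>interior T. \<mu> x \<ge> 0"
  shows "(\<Sum>T\<in>\<T>. (elem_val T \<mu> - elem_val T lam) * gap T) \<ge> 0"
proof -
  have "(\<sigma>, \<mu>) \<in> Kh \<T> \<Omega>" using sol_RT0 \<mu> \<mu>_nonneg by (simp add: Kh_def)
  from VI[OF this]
  have "ip \<Omega> (\<lambda>x. wdiv \<Omega> (\<lambda>y. 0) x + \<mu> x - lam x) u \<ge> ip \<Omega> (\<lambda>x. \<mu> x - lam x) g"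
    by (simp add: ipv_def)
  moreover have "ip \<Omega> (\<lambda>x. wdiv \<Omega> (\<lambda>y. 0) x + \<mu> x - lam x) u = ip \<Omega> (\<lambda>x. \<mu> x - lam x) u"
  proof -
    have "AE x in lebesgue_on \<Omega>. (wdiv \<Omega> (\<lambda>y. 0) x + \<mu> x - lam x) * u x = (\<mu> x - lam x) * u x"
      using wdiv_zero_AE by eventually_elim simp
    moreover have "wdiv \<Omega> (\<lambda>y. 0) \<in> borel_measurable (lebesgue_on \<Omega>)"
      using L2_has_weak_div_wdiv[OF Hdiv_zero[of \<Omega>]] by (simp add: L2_def)
    ultimately show ?thesis
      unfolding ip_def using P0_borel_measurable[OF \<mu>] P0_borel_measurable[OF lam_P0] P0_borel_measurable[OF sol_M]
      by (intro integral_cong_AE borel_measurable_times borel_measurable_diff borel_measurable_add) auto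
  qed
  moreover have "ip \<Omega> (\<lambda>x. \<mu> x - lam x) F = (\<Sum>T\<in>\<T>. (elem_val T \<mu> - elem_val T lam) * elem_integral T F)"
    if "integrable (lebesgue_on \<Omega>) F" for F
    using ip_P0_eq_sum[OF P0_diff[OF \<mu> lam_P0] that] by (simp add: elem_val_def)
  ultimately show ?thesis
    using integrable_P0[OF sol_M] g by (simp add: gap_def right_diff_distrib sum_subtractf)
qed

lemma gap_nonneg:
  assumes T0: "T0 \<in> \<T>"
  shows "gap T0 \<ge> 0"
proof -
  let ?\<mu> = "\<lambda>x. lam x + indicator (interior T0) x"
  have "elem_val T ?\<mu> - elem_val T lam = (if T = T0 then 1 else 0)" if "T \<in> \<T>" for T
  proof -
    have "elem_val T ?\<mu> - elem_val T lam = elem_val T (indicator (interior T0))"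
      by (simp add: elem_val_def)
    then show ?thesis
      using elem_val_pw_const[OF that] indicator_interior_eq_pw_const[OF T0] by simp
  qed
  then have "(\<Sum>T\<in>\<T>. (elem_val T ?\<mu> - elem_val T lam) * gap T) = (\<Sum>T\<in>\<T>. if T = T0 then gap T else 0)"
    by (intro sum.cong) auto
  also have "\<dots> = gap T0" using T0 finite_mesh by simp
  finally show ?thesis
    using multiplier_inequality[OF P0_add[OF lam_P0 indicator_interior_in_P0[OF T0]]] lam_nonneg
    by (fastforce split: split_indicator)
qed

lemma elem_val_lam_nonneg: "T \<in> \<T> \<Longrightarrow> elem_val T lam \<ge> 0"
  using lam_nonneg some_in_interior_element unfolding elem_val_def by blast

text \<open>The multipliers \<open>\<mu> = 0\<close> and \<open>\<mu> = 2 lam\<close> give both signs.\<close>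

lemma sum_lam_gap_eq_0: "(\<Sum>T\<in>\<T>. elem_val T lam * gap T) = 0"
proof -
  have "(\<Sum>T\<in>\<T>. (elem_val T (\<lambda>x. 0) - elem_val T lam) * gap T) \<ge> 0"
    using multiplier_inequality[OF P0_const] by simp
  moreover have "(\<Sum>T\<in>\<T>. (elem_val T (\<lambda>x. lam x + lam x) - elem_val T lam) * gap T) \<ge> 0"
    using multiplier_inequality[OF P0_add[OF lam_P0 lam_P0]] lam_nonneg by force
  ultimately show ?thesis by (simp add: elem_val_def sum_negf)
qed

lemma lam_gap_eq_0: "T \<in> \<T> \<Longrightarrow> elem_val T lam * gap T = 0"
  using sum_nonneg_eq_0_iff[OF finite_mesh, of "\<lambda>T. elem_val T lam * gap T"] sum_lam_gap_eq_0
    elem_val_lam_nonneg gap_nonneg by (auto intro: mult_nonneg_nonneg)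

lemma ip_lam_u_minus_g: "ip \<Omega> lam (\<lambda>x. u x - g x) = 0"
proof -
  have "ip \<Omega> lam (\<lambda>x. u x - g x) = (\<Sum>T\<in>\<T>. elem_val T lam * elem_integral T (\<lambda>x. u x - g x))"
    using ip_P0_eq_sum[OF lam_P0] integrable_P0[OF sol_M] g by simp
  also have "\<dots> = (\<Sum>T\<in>\<T>. elem_val T lam * gap T)"
    using elem_integral_diff[OF integrable_P0[OF sol_M] g] by (simp add: gap_def)
  finally show ?thesis using sum_lam_gap_eq_0 by simp
qed

lemma u_minus_Pi0_g_eq:
  assumes T: "T \<in> \<T>" and x: "x \<in> interior T"
  shows "u x - Pi0 \<T> \<Omega> g x = gap T / vol T"
  using elem_val_eq[OF sol_M T x] Pi0_eq[OF g T x] elem_integral_P0[OF sol_M T] vol_pos[OF T]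
  by (simp add: gap_def field_simps)

lemma AE_u_minus_Pi0_g_nonneg: "AE x in lebesgue_on \<Omega>. u x - Pi0 \<T> \<Omega> g x \<ge> 0"
  using AE_in_interior_element
proof eventually_elim
  case (elim x)
  then obtain T where "T \<in> \<T>" "x \<in> interior T" by blast
  then show ?case using u_minus_Pi0_g_eq gap_nonneg vol_pos by (simp add: divide_nonneg_pos)
qed

lemma AE_complementarity: "AE x in lebesgue_on \<Omega>. lam x * (u x - Pi0 \<T> \<Omega> g x) = 0"
  using AE_in_interior_element
proof eventually_elim
  case (elim x)
  then obtain T where T: "T \<in> \<T>" "x \<in> interior T" by blast
  then have "lam x * (u x - Pi0 \<T> \<Omega> g x) = elem_val T lam * gap T / vol T"
    using u_minus_Pi0_g_eq elem_val_eq[OF lam_P0] by simp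
  then show ?case using lam_gap_eq_0[OF T(1)] by simp
qed

lemma AE_wdiv_plus_lam: "AE x in lebesgue_on \<Omega>. wdiv \<Omega> \<sigma> x + lam x = - Pi0 \<T> \<Omega> f x"
proof -
  obtain c where c: "AE x in lebesgue_on \<Omega>. \<forall>T\<in>\<T>. x \<in> interior T \<longrightarrow> wdiv \<Omega> \<sigma> x = c T"
    using wdiv_RT0_piecewise_const[OF sol_RT0] by blast
  have fi: "integrable (lebesgue_on \<Omega>) f" using L2_imp_integrable[OF f] .
  have c_eq: "c T + elem_val T lam = - elem_integral T f / vol T" if T: "T \<in> \<T>" for T
  proof -
    have "AE x in lebesgue_on \<Omega>. x \<in> interior T \<longrightarrow> wdiv \<Omega> \<sigma> x + lam x = c T + elem_val T lam"
      using c by eventually_elim (use T in \<open>auto simp: elem_val_eq[OF lam_P0 T]\<close>)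
    moreover have "(\<lambda>x. wdiv \<Omega> \<sigma> x + lam x) \<in> borel_measurable (lebesgue_on \<Omega>)"
      using L2_has_weak_div_wdiv[OF sol_Hdiv] P0_borel_measurable[OF lam_P0]
      by (intro borel_measurable_add) (auto simp: L2_def)
    ultimately have "ip \<Omega> (\<lambda>x. wdiv \<Omega> \<sigma> x + lam x) (indicator (interior T)) = (c T + elem_val T lam) * vol T"
      by (rule ip_indicator_interior_eq[rotated])
    moreover have "ip \<Omega> f (indicator (interior T)) = elem_integral T f"
      unfolding ip_def elem_integral_def by (simp add: mult.commute)
    ultimately show ?thesis
      using EQ indicator_interior_in_P0[OF T] vol_pos[OF T] by (simp add: field_simps)
  qed
  show ?thesis
    using AE_in_interior_element c
  proof eventually_elim
    case (elim x)
    then obtain T where T: "T \<in> \<T>" "x \<in> interior T" by blast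
    then have "wdiv \<Omega> \<sigma> x + lam x = c T + elem_val T lam"
      using elim elem_val_eq[OF lam_P0] by auto
    then show ?case using c_eq[OF T(1)] Pi0_eq[OF fi T] by simp
  qed
qed

end

theorem proposition3p3:
  fixes \<Omega> :: "(real^'n::finite) set"
    and \<T> :: "(real^'n) set set"
    and f g u\<^sub>h lam\<^sub>h :: "real^'n \<Rightarrow> real"
    and \<sigma>\<^sub>h :: "real^'n \<Rightarrow> real^'n"
  assumes dim: "CARD('n) = 2 \<or> CARD('n) = 3"
    and dom: "lipschitz_domain \<Omega>"
    and mesh: "conforming_simplicial_mesh \<T> \<Omega>"
    and f: "L2 \<Omega> f"
    and g_H1: "g \<in> H1 \<Omega>" and g_cont: "continuous_on (closure \<Omega>) g"
    and g_bdry: "\<forall>x\<in>frontier \<Omega>. g x \<le> 0"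
    and sol_K: "(\<sigma>\<^sub>h, lam\<^sub>h) \<in> Kh \<T> \<Omega>" and sol_M: "u\<^sub>h \<in> P0 \<T>"
    and VI: "\<forall>(\<tau>, \<mu>) \<in> Kh \<T> \<Omega>.
               ipv \<Omega> \<sigma>\<^sub>h (\<lambda>x. \<tau> x - \<sigma>\<^sub>h x)
               + ip \<Omega> (\<lambda>x. wdiv \<Omega> (\<lambda>y. \<tau> y - \<sigma>\<^sub>h y) x + \<mu> x - lam\<^sub>h x) u\<^sub>h
             \<ge> ip \<Omega> (\<lambda>x. \<mu> x - lam\<^sub>h x) g"
    and EQ: "\<forall>v \<in> P0 \<T>. ip \<Omega> (\<lambda>x. wdiv \<Omega> \<sigma>\<^sub>h x + lam\<^sub>h x) v = - ip \<Omega> f v"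
  shows "(AE x in lebesgue_on \<Omega>. wdiv \<Omega> \<sigma>\<^sub>h x + lam\<^sub>h x = - Pi0 \<T> \<Omega> f x)
       \<and> (\<forall>\<tau> \<in> RT0 \<T> \<Omega>. ipv \<Omega> \<sigma>\<^sub>h \<tau> + ip \<Omega> (wdiv \<Omega> \<tau>) u\<^sub>h = 0)
       \<and> ip \<Omega> lam\<^sub>h (\<lambda>x. u\<^sub>h x - g x) = 0
       \<and> (AE x in lebesgue_on \<Omega>. lam\<^sub>h x * (u\<^sub>h x - Pi0 \<T> \<Omega> g x) = 0)
       \<and> (AE x in lebesgue_on \<Omega>. u\<^sub>h x - Pi0 \<T> \<Omega> g x \<ge> 0)"
proof -
  have "open \<Omega>" "bounded \<Omega>" using dom by (auto simp: lipschitz_domain_def)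
  then interpret bounded_open_domain \<Omega> by unfold_locales
  have "integrable (lebesgue_on \<Omega>) g" using g_H1 L2_imp_integrable by (auto simp: H1_def)
  then interpret discrete_solution \<Omega> \<T> f g u\<^sub>h lam\<^sub>h \<sigma>\<^sub>h
    using mesh f sol_K sol_M VI EQ by unfold_locales blast+
  show ?thesis
    using AE_wdiv_plus_lam RT0_orthogonality ip_lam_u_minus_g AE_complementarity
      AE_u_minus_Pi0_g_nonneg by blast
qed

end
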